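(* Let $n,k\ge2$, $X=\{(i,j):1\le i\le n,\ 1\le j\le k\}$, let $G\cong S_n\wr S_k=S_n^{k}\rtimes S_k$ be the group of all permutations of $X$ that map each column $\{(i,j):1\le i\le n\}$ ($j$ fixed) onto a column, and let $H$ be the stabilizer of $x_0=(1,1)$. Then $(H,G)$ is a Gelfand pair; the $H$-orbits on $X$ are $o_1=\{(1,1)\}$, $o_2=\{(i,1):2\le i\le n\}$, $o_3=\{(i,j):j\ge2\}$, of sizes $1,\,n-1,\,n(k-1)$; and $\mathbb{C}[X]=T_1\oplus T_2\oplus T_3$ into pairwise non-isomorphic irreducibles, where $T_1$ is the constants, $T_2$ is the space of functions $f(i,j)=u(j)$ with $\sum_j u(j)=0$ (dimension $k-1$), and $T_3$ is the orthogonal complement of $T_1\oplus T_2$ (dimension $(n-1)k$). With $\mathrm{X}_i$ the characteristic function of the $G$-orbit of $X\times X$ containing $\{x_0\}\times o_i$ and $\Psi_j$ the spherical idempotent of $T_j$, the matrix $C_{ij}=(\mathrm{X}_i,\Psi_j)$ is $$M_{n,k}=\begin{pmatrix}1&k-1&k(n-1)\\ n-1&(k-1)(n-1)&-k(n-1)\\ (k-1)n&(1-k)n&0\end{pmatrix},$$ and $M_{n,k}^{T}=M_{k,n}$ (the corresponding matrix for $S_k\wr S_n$ acting on the same set with rows and columns interchanged).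
   Context: For a finite group $G$, a subgroup $H$, and $X=G/H$: the space $\mathbb{C}[X\times X]^G$ of diagonally $G$-invariant functions on $X\times X$ carries the convolution $(f\times g)(x,z)=\sum_yf(x,y)g(y,z)$ and the inner product $(a,b)=\sum_{x,y}a(x,y)\overline{b(x,y)}$; $(H,G)$ is a Gelfand pair if this convolution algebra is commutative. For each irreducible summand $T_j$ of $\mathbb{C}[X]$ (with $(gf)(x)=f(g^{-1}x)$), with $G$-invariant Hermitian inner product $\langle\cdot,\cdot\rangle$ (linear in the first variable) and unit $H$-invariant vector $\theta_j$, set $\psi_j(g)=\frac{\dim T_j}{|X|}\langle T_j(g)\theta_j,\theta_j\rangle$ and $\Psi_j(gH,g'H)=\psi_j(g^{-1}g')$, a function on $X\times X$. *)

theory Defs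
  imports "HOL-Analysis.Analysis" "HOL-Library.Function_Algebras"
begin

definition lcoset :: "('a \<Rightarrow> 'a) \<Rightarrow> ('a \<Rightarrow> 'a) set \<Rightarrow> ('a \<Rightarrow> 'a) set" where
  "lcoset g H = (\<lambda>h. g \<circ> h) ` H"

definition coset_space :: "('a \<Rightarrow> 'a) set \<Rightarrow> ('a \<Rightarrow> 'a) set \<Rightarrow> ('a \<Rightarrow> 'a) set set" where
  "coset_space G H = (\<lambda>g. lcoset g H) ` G"

definition coset_act :: "('a \<Rightarrow> 'a) \<Rightarrow> ('a \<Rightarrow> 'a) set \<Rightarrow> ('a \<Rightarrow> 'a) set" where
  "coset_act g C = (\<lambda>c. g \<circ> c) ` C"

definition diag_invariant :: "'g set \<Rightarrow> ('g \<Rightarrow> 'b \<Rightarrow> 'b) \<Rightarrow> 'b set \<Rightarrow> ('b \<times> 'b \<Rightarrow> complex) \<Rightarrow> bool" where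
  "diag_invariant G act Y F \<longleftrightarrow>
     (\<forall>p. p \<notin> Y \<times> Y \<longrightarrow> F p = 0) \<and>
     (\<forall>g\<in>G. \<forall>x\<in>Y. \<forall>y\<in>Y. F (act g x, act g y) = F (x, y))"

definition conv :: "'b set \<Rightarrow> ('b \<times> 'b \<Rightarrow> complex) \<Rightarrow> ('b \<times> 'b \<Rightarrow> complex) \<Rightarrow> ('b \<times> 'b \<Rightarrow> complex)" where
  "conv Y F1 F2 = (\<lambda>(x, z). if x \<in> Y \<and> z \<in> Y then (\<Sum>y\<in>Y. F1 (x, y) * F2 (y, z)) else 0)"

definition gelfand_pair :: "('a \<Rightarrow> 'a) set \<Rightarrow> ('a \<Rightarrow> 'a) set \<Rightarrow> bool" where
  "gelfand_pair H G \<longleftrightarrow>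
     (\<forall>F1 F2. diag_invariant G coset_act (coset_space G H) F1 \<and>
              diag_invariant G coset_act (coset_space G H) F2 \<longrightarrow>
              conv (coset_space G H) F1 F2 = conv (coset_space G H) F2 F1)"

definition cscale :: "complex \<Rightarrow> ('b \<Rightarrow> complex) \<Rightarrow> ('b \<Rightarrow> complex)" where
  "cscale c f = (\<lambda>x. c * f x)"

definition funsp :: "'b set \<Rightarrow> ('b \<Rightarrow> complex) set" where
  "funsp X = {f. \<forall>x. x \<notin> X \<longrightarrow> f x = 0}"

definition inner_X :: "'b set \<Rightarrow> ('b \<Rightarrow> complex) \<Rightarrow> ('b \<Rightarrow> complex) \<Rightarrow> complex" where
  "inner_X X f g = (\<Sum>x\<in>X. f x * cnj (g x))"

abbreviation csubspace :: "('b \<Rightarrow> complex) set \<Rightarrow> bool" where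
  "csubspace W \<equiv> module.subspace cscale W"

abbreviation cdim :: "('b \<Rightarrow> complex) set \<Rightarrow> nat" where
  "cdim W \<equiv> vector_space.dim cscale W"

abbreviation clinear :: "(('b \<Rightarrow> complex) \<Rightarrow> ('b \<Rightarrow> complex)) \<Rightarrow> bool" where
  "clinear L \<equiv> Vector_Spaces.linear cscale cscale L"

definition perm_act :: "('b \<Rightarrow> 'b) \<Rightarrow> ('b \<Rightarrow> complex) \<Rightarrow> ('b \<Rightarrow> complex)" where
  "perm_act g f = (\<lambda>x. f (inv g x))"

definition G_invariant_sub :: "('b \<Rightarrow> 'b) set \<Rightarrow> ('b \<Rightarrow> complex) set \<Rightarrow> bool" where
  "G_invariant_sub G W \<longleftrightarrow> csubspace W \<and> (\<forall>g\<in>G. \<forall>f\<in>W. perm_act g f \<in> W)"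

definition irreducible_rep :: "('b \<Rightarrow> 'b) set \<Rightarrow> ('b \<Rightarrow> complex) set \<Rightarrow> bool" where
  "irreducible_rep G W \<longleftrightarrow> G_invariant_sub G W \<and> W \<noteq> {0} \<and>
     (\<forall>U. G_invariant_sub G U \<and> U \<subseteq> W \<longrightarrow> U = {0} \<or> U = W)"

definition isomorphic_rep :: "('b \<Rightarrow> 'b) set \<Rightarrow> ('b \<Rightarrow> complex) set \<Rightarrow> ('b \<Rightarrow> complex) set \<Rightarrow> bool" where
  "isomorphic_rep G V W \<longleftrightarrow> (\<exists>L. clinear L \<and> bij_betw L V W \<and>
     (\<forall>g\<in>G. \<forall>f\<in>V. L (perm_act g f) = perm_act g (L f)))"

definition direct_sum3 :: "('b \<Rightarrow> complex) set \<Rightarrow> ('b \<Rightarrow> complex) set \<Rightarrow> ('b \<Rightarrow> complex) set \<Rightarrow> ('b \<Rightarrow> complex) set \<Rightarrow> bool" where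
  "direct_sum3 V W1 W2 W3 \<longleftrightarrow>
     W1 \<subseteq> V \<and> W2 \<subseteq> V \<and> W3 \<subseteq> V \<and>
     (\<forall>f\<in>V. \<exists>!(f1, f2, f3). f1 \<in> W1 \<and> f2 \<in> W2 \<and> f3 \<in> W3 \<and> f = f1 + f2 + f3)"

definition theta :: "('b \<Rightarrow> 'b) set \<Rightarrow> 'b set \<Rightarrow> ('b \<Rightarrow> complex) set \<Rightarrow> ('b \<Rightarrow> complex)" where
  "theta H X T = (SOME \<theta>. \<theta> \<in> T \<and> (\<forall>h\<in>H. perm_act h \<theta> = \<theta>) \<and> inner_X X \<theta> \<theta> = 1)"

definition psi :: "('b \<Rightarrow> 'b) set \<Rightarrow> 'b set \<Rightarrow> ('b \<Rightarrow> complex) set \<Rightarrow> ('b \<Rightarrow> 'b) \<Rightarrow> complex" where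
  "psi H X T g = (of_nat (cdim T) / of_nat (card X)) *
                 inner_X X (perm_act g (theta H X T)) (theta H X T)"

text \<open>Psi(gH, g'H) = psi(g^{-1} g'); the coset gH is identified with g x0 \<in> X.\<close>

definition rep_of :: "('b \<Rightarrow> 'b) set \<Rightarrow> 'b \<Rightarrow> 'b \<Rightarrow> ('b \<Rightarrow> 'b)" where
  "rep_of G x0 x = (SOME g. g \<in> G \<and> g x0 = x)"

definition Psi :: "('b \<Rightarrow> 'b) set \<Rightarrow> ('b \<Rightarrow> 'b) set \<Rightarrow> 'b set \<Rightarrow> 'b \<Rightarrow> ('b \<Rightarrow> complex) set \<Rightarrow> ('b \<times> 'b \<Rightarrow> complex)" where
  "Psi G H X x0 T = (\<lambda>(x, y). if x \<in> X \<and> y \<in> X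
      then psi H X T (inv (rep_of G x0 x) \<circ> rep_of G x0 y) else 0)"

definition orbit_char :: "('b \<Rightarrow> 'b) set \<Rightarrow> 'b \<Rightarrow> 'b set \<Rightarrow> ('b \<times> 'b \<Rightarrow> complex)" where
  "orbit_char G x0 Orb = (\<lambda>p. if p \<in> {(g x0, g y) | g y. g \<in> G \<and> y \<in> Orb} then 1 else 0)"

definition inner_XX :: "'b set \<Rightarrow> ('b \<times> 'b \<Rightarrow> complex) \<Rightarrow> ('b \<times> 'b \<Rightarrow> complex) \<Rightarrow> complex" where
  "inner_XX X a b = (\<Sum>p\<in>X \<times> X. a p * cnj (b p))"

definition Xset :: "nat \<Rightarrow> nat \<Rightarrow> (nat \<times> nat) set" where
  "Xset n k = {1..n} \<times> {1..k}"

definition column :: "nat \<Rightarrow> nat \<Rightarrow> (nat \<times> nat) set" where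
  "column n j = {1..n} \<times> {j}"

definition wreathG :: "nat \<Rightarrow> nat \<Rightarrow> (nat \<times> nat \<Rightarrow> nat \<times> nat) set" where
  "wreathG n k = {p. p permutes Xset n k \<and>
      (\<forall>j\<in>{1..k}. \<exists>j'\<in>{1..k}. p ` column n j = column n j')}"

definition stabH :: "nat \<Rightarrow> nat \<Rightarrow> (nat \<times> nat \<Rightarrow> nat \<times> nat) set" where
  "stabH n k = {p \<in> wreathG n k. p (1, 1) = (1, 1)}"

definition orbits_of :: "('b \<Rightarrow> 'b) set \<Rightarrow> 'b set \<Rightarrow> 'b set set" where
  "orbits_of H X = (\<lambda>x. (\<lambda>h. h x) ` H) ` X"

definition orb1 :: "nat \<Rightarrow> nat \<Rightarrow> (nat \<times> nat) set" where
  "orb1 n k = {(1, 1)}"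
definition orb2 :: "nat \<Rightarrow> nat \<Rightarrow> (nat \<times> nat) set" where
  "orb2 n k = {2..n} \<times> {1}"
definition orb3 :: "nat \<Rightarrow> nat \<Rightarrow> (nat \<times> nat) set" where
  "orb3 n k = {1..n} \<times> {2..k}"

definition Tconst :: "nat \<Rightarrow> nat \<Rightarrow> (nat \<times> nat \<Rightarrow> complex) set" where
  "Tconst n k = {f \<in> funsp (Xset n k). \<exists>c. \<forall>x\<in>Xset n k. f x = c}"

definition Tcol :: "nat \<Rightarrow> nat \<Rightarrow> (nat \<times> nat \<Rightarrow> complex) set" where
  "Tcol n k = {f \<in> funsp (Xset n k). \<exists>u :: nat \<Rightarrow> complex.
       (\<Sum>j=1..k. u j) = 0 \<and> (\<forall>(i, j)\<in>Xset n k. f (i, j) = u j)}"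

definition Trest :: "nat \<Rightarrow> nat \<Rightarrow> (nat \<times> nat \<Rightarrow> complex) set" where
  "Trest n k = {f \<in> funsp (Xset n k).
       \<forall>g \<in> Tconst n k \<union> Tcol n k. inner_X (Xset n k) f g = 0}"

definition Tj :: "nat \<Rightarrow> nat \<Rightarrow> nat \<Rightarrow> (nat \<times> nat \<Rightarrow> complex) set" where
  "Tj n k j = (if j = 1 then Tconst n k else if j = 2 then Tcol n k else Trest n k)"

definition orbj :: "nat \<Rightarrow> nat \<Rightarrow> nat \<Rightarrow> (nat \<times> nat) set" where
  "orbj n k i = (if i = 1 then orb1 n k else if i = 2 then orb2 n k else orb3 n k)"

definition Mmat :: "nat \<Rightarrow> nat \<Rightarrow> nat \<Rightarrow> nat \<Rightarrow> int" where
  "Mmat n k i j = (let n = int n; k = int k in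
     if i = 1 then (if j = 1 then 1 else if j = 2 then k - 1 else k * (n - 1))
     else if i = 2 then (if j = 1 then n - 1 else if j = 2 then (k - 1) * (n - 1) else - k * (n - 1))
     else (if j = 1 then (k - 1) * n else if j = 2 then (1 - k) * n else 0))"

definition Cmat :: "nat \<Rightarrow> nat \<Rightarrow> nat \<Rightarrow> nat \<Rightarrow> complex" where
  "Cmat n k i j = inner_XX (Xset n k)
      (orbit_char (wreathG n k) (1, 1) (orbj n k i))
      (Psi (wreathG n k) (stabH n k) (Xset n k) (1, 1) (Tj n k j))"

end

theory Submission
  imports Defs
begin

(* Everything rests on one family of elements of G: for points x, y of X, the permutation that
   transposes the columns of x and y and, inside these two columns, the rows of x and y is an
   involution in G exchanging x and y.  It exchanges any two cosets of H as well, so every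
   G-invariant kernel on G/H is symmetric and convolution is commutative (Gelfand's trick).
   For a nonzero vector f of an invariant subspace of T_2 (resp. T_3), f minus its image under
   such a swap is a nonzero multiple of a difference of two column indicators (resp. of two
   point indicators); these differences span T_2 (resp. T_3), hence irreducibility.  The H-fixed
   vectors of each T_j form the line spanned by a combination of the indicators of X, of the
   column of x0 and of x0.  Transporting it by G gives Psi_j (x, y) as a function of whether
   x = y or x and y share a column, and summing over the three G-orbits of X x X gives the
   matrix. *)

section \<open>Permutation representations\<close>

lemma vector_space_cscale: "vector_space cscale"
  by unfold_locales (auto simp: cscale_def fun_eq_iff algebra_simps)

interpretation cs: vector_space cscale
  by (rule vector_space_cscale)

lemma cscale_apply [simp]: "cscale c f x = c * f x"
  by (simp add: cscale_def)

lemma sum_fun_apply: "(sum f A) x = (\<Sum>a\<in>A. f a x)"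
  by (induct A rule: infinite_finite_induct) auto

lemma funspD: "f \<in> funsp S \<Longrightarrow> x \<notin> S \<Longrightarrow> f x = 0"
  unfolding funsp_def by blast

lemma perm_act_add [simp]: "perm_act g (f1 + f2) = perm_act g f1 + perm_act g f2"
  and perm_act_diff [simp]: "perm_act g (f1 - f2) = perm_act g f1 - perm_act g f2"
  and perm_act_cscale [simp]: "perm_act g (cscale c f) = cscale c (perm_act g f)"
  by (simp_all add: perm_act_def fun_eq_iff)

lemma perm_act_indicator:
  assumes "bij g"
  shows "perm_act g (indicator S) = indicator (g ` S)"
proof
  fix x
  have "inv g x \<in> S \<longleftrightarrow> x \<in> g ` S"
    using assms by (metis bij_inv_eq_iff image_iff)
  then show "perm_act g (indicator S) x = indicator (g ` S) x"
    by (simp add: perm_act_def indicator_def)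
qed

lemma perm_act_perm_act:
  assumes "bij a" "bij b"
  shows "perm_act a (perm_act b f) = perm_act (a \<circ> b) f"
  unfolding perm_act_def o_inv_distrib[OF assms] by simp

lemma perm_act_inv_comp:
  assumes "bij a" "bij b"
  shows "perm_act a (perm_act (inv a \<circ> b) f) = perm_act b f"
proof -
  have "a \<circ> (inv a \<circ> b) = b"
    using assms(1) by (simp add: fun_eq_iff bij_is_surj surj_f_inv_f)
  then show ?thesis
    using perm_act_perm_act[OF assms(1) bij_comp[OF assms(2) bij_imp_bij_inv[OF assms(1)]]]
    by simp
qed

lemma perm_act_funsp:
  assumes g: "g permutes X" and f: "f \<in> funsp X"
  shows "perm_act g f \<in> funsp X"
  unfolding funsp_def perm_act_def
proof (intro CollectI allI impI)
  fix x assume "x \<notin> X"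
  then have "inv g x \<notin> X"
    using permutes_in_image[OF permutes_inv[OF g]] by simp
  then show "f (inv g x) = 0" using funspD[OF f] by blast
qed

lemma perm_act_funsp_const:
  assumes g: "g permutes X" and f: "f \<in> funsp X" "\<forall>x\<in>X. f x = c"
  shows "perm_act g f = f"
proof
  fix x
  have "inv g x \<in> X \<longleftrightarrow> x \<in> X"
    using permutes_in_image[OF permutes_inv[OF g]] by simp
  then show "perm_act g f x = f x"
    unfolding perm_act_def using f funspD[OF f(1)] by (cases "x \<in> X") simp_all
qed

lemma inner_X_add_left: "inner_X X (f1 + f2) h = inner_X X f1 h + inner_X X f2 h"
  and inner_X_add_right: "inner_X X f (h1 + h2) = inner_X X f h1 + inner_X X f h2"
  and inner_X_cscale_left: "inner_X X (cscale c f) h = c * inner_X X f h"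
  and inner_X_cscale_right: "inner_X X f (cscale c h) = cnj c * inner_X X f h"
  by (simp_all add: inner_X_def sum.distrib sum_distrib_left algebra_simps)

lemma inner_X_indicator:
  assumes "finite X"
  shows "inner_X X (indicator A) (indicator B) = of_nat (card (X \<inter> A \<inter> B))"
proof -
  have "inner_X X (indicator A) (indicator B) = (\<Sum>x\<in>X \<inter> (A \<inter> B). 1)"
    unfolding inner_X_def sum.inter_restrict[OF assms]
    by (intro sum.cong refl) (simp split: split_indicator)
  then show ?thesis by (simp add: Int_assoc)
qed

lemma inner_X_perm_act:
  assumes "g permutes X"
  shows "inner_X X (perm_act g f) (perm_act g h) = inner_X X f h"
  unfolding inner_X_def perm_act_def
  by (rule sum.reindex_bij_betw[OF permutes_imp_bij[OF permutes_inv[OF assms]]])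

lemma inner_X_perm_act_left:
  assumes "g permutes X"
  shows "inner_X X (perm_act g f) h = inner_X X f (perm_act (inv g) h)"
proof -
  have "perm_act g (perm_act (inv g) h) = h"
    using permutes_inverses[OF assms] by (simp add: perm_act_def permutes_inv_inv[OF assms])
  then show ?thesis
    using inner_X_perm_act[OF assms, of f "perm_act (inv g) h"] by simp
qed

lemma independent_if_dual_points:
  assumes dual: "\<And>i i'. i \<in> I \<Longrightarrow> i' \<in> I \<Longrightarrow> \<phi> i (p i') = (if i = i' then 1 else 0)"
  shows "inj_on \<phi> I" and "cs.independent (\<phi> ` I)"
proof -
  show inj: "inj_on \<phi> I"
  proof (rule inj_onI)
    fix i i' assume "i \<in> I" "i' \<in> I" "\<phi> i = \<phi> i'"
    then show "i = i'" using dual[of i i'] dual[of i' i'] by (simp split: if_splits)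
  qed
  show "cs.independent (\<phi> ` I)"
    unfolding cs.dependent_explicit
  proof clarify
    fix t u v
    assume t: "finite t" "t \<subseteq> \<phi> ` I" and s: "(\<Sum>v\<in>t. cscale (u v) v) = 0"
      and v: "v \<in> t" "u v \<noteq> 0"
    obtain i where i: "i \<in> I" "v = \<phi> i" using v t by blast
    have "0 = (\<Sum>w\<in>t. u w * w (p i))" using s by (simp add: sum_fun_apply fun_eq_iff)
    also have "\<dots> = (\<Sum>w\<in>t. if w = v then u w else 0)"
    proof (rule sum.cong[OF refl])
      fix w assume "w \<in> t"
      then obtain i' where i': "i' \<in> I" "w = \<phi> i'" using t by blast
      then have "(i' = i) = (w = v)" using inj i by (auto dest: inj_onD)
      then show "u w * w (p i) = (if w = v then u w else 0)" using dual[OF i'(1) i(1)] i' by simp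
    qed
    also have "\<dots> = u v" using t(1) v(1) by simp
    finally show False using v(2) by simp
  qed
qed

lemma G_invariant_sub_subspace: "G_invariant_sub G U \<Longrightarrow> csubspace U"
  unfolding G_invariant_sub_def by blast

lemma G_invariant_sub_perm_act: "G_invariant_sub G U \<Longrightarrow> g \<in> G \<Longrightarrow> f \<in> U \<Longrightarrow> perm_act g f \<in> U"
  unfolding G_invariant_sub_def by blast

lemma G_invariant_sub_difference:
  assumes U: "G_invariant_sub G U" and g: "g \<in> G" and f: "f \<in> U"
    and diff: "f - perm_act g f = cscale c v" and c: "c \<noteq> 0"
  shows "v \<in> U"
proof -
  have sU: "csubspace U" using G_invariant_sub_subspace[OF U] .
  have "cscale c v \<in> U"
    unfolding diff[symmetric] by (rule cs.subspace_diff[OF sU f G_invariant_sub_perm_act[OF U g f]])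
  then have "cscale (1 / c) (cscale c v) \<in> U" by (rule cs.subspace_scale[OF sU])
  then show ?thesis using c by (simp add: cscale_def)
qed

lemma neq_singleton_zeroI: "f \<in> W \<Longrightarrow> f x \<noteq> 0 \<Longrightarrow> W \<noteq> {0}"
  by auto

lemma irreducible_repI:
  assumes W: "G_invariant_sub G W" "W \<noteq> {0}"
    and generates: "\<And>U f. G_invariant_sub G U \<Longrightarrow> U \<subseteq> W \<Longrightarrow> f \<in> U \<Longrightarrow> f \<noteq> 0 \<Longrightarrow> W \<subseteq> U"
  shows "irreducible_rep G W"
  unfolding irreducible_rep_def
proof (intro conjI allI impI W)
  fix U assume U: "G_invariant_sub G U \<and> U \<subseteq> W"
  show "U = {0} \<or> U = W"
  proof (cases "U = {0}")
    case False
    then obtain f where "f \<in> U" "f \<noteq> 0"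
      using cs.subspace_0[OF G_invariant_sub_subspace] U by blast
    then show ?thesis using generates U by blast
  qed simp
qed

lemma not_isomorphic_rep_if_fixed:
  assumes g: "g \<in> G" and W: "\<forall>f\<in>W. perm_act g f = f"
    and V: "G_invariant_sub G V" "f0 \<in> V" "perm_act g f0 \<noteq> f0"
  shows "\<not> isomorphic_rep G V W \<and> \<not> isomorphic_rep G W V"
proof (intro conjI notI)
  assume "isomorphic_rep G V W"
  then obtain L where L: "bij_betw L V W" "\<forall>g\<in>G. \<forall>f\<in>V. L (perm_act g f) = perm_act g (L f)"
    unfolding isomorphic_rep_def by blast
  have "L f0 \<in> W" using L(1) V(2) bij_betwE by blast
  then have "L (perm_act g f0) = L f0" using L(2) g V(2) W by simp
  then show False
    using V G_invariant_sub_perm_act[OF V(1) g V(2)] L(1)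
    by (metis bij_betw_imp_inj_on inj_onD)
next
  assume "isomorphic_rep G W V"
  then obtain L where L: "bij_betw L W V" "\<forall>g\<in>G. \<forall>f\<in>W. L (perm_act g f) = perm_act g (L f)"
    unfolding isomorphic_rep_def by blast
  obtain w where w: "w \<in> W" "L w = f0" using L(1) V(2) by (metis bij_betw_imp_surj_on imageE)
  have "perm_act g f0 = L (perm_act g w)" using L(2) g w by simp
  then show False using W w V(3) by simp
qed

lemma conv_commute_if_swapping:
  assumes F1: "diag_invariant G act Y F1" and F2: "diag_invariant G act Y F2"
    and swap: "\<And>C E. C \<in> Y \<Longrightarrow> E \<in> Y \<Longrightarrow>
                 \<exists>s\<in>G. act s C = E \<and> act s E = C \<and> bij_betw (act s) Y Y"
  shows "conv Y F1 F2 = conv Y F2 F1"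
proof -
  have sym: "F (C, E) = F (E, C)" if F: "diag_invariant G act Y F" and CE: "C \<in> Y" "E \<in> Y" for F C E
  proof -
    obtain s where "s \<in> G" "act s C = E" "act s E = C" using swap[OF CE] by blast
    then show ?thesis using F CE unfolding diag_invariant_def by metis
  qed
  have "conv Y F1 F2 (C, E) = conv Y F2 F1 (C, E)" if CE: "C \<in> Y" "E \<in> Y" for C E
  proof -
    obtain s where s: "s \<in> G" "act s C = E" "act s E = C" "bij_betw (act s) Y Y"
      using swap[OF CE] by blast
    have "conv Y F1 F2 (C, E) = (\<Sum>D\<in>Y. F1 (C, D) * F2 (D, E))"
      using CE by (simp add: conv_def)
    also have "\<dots> = (\<Sum>D\<in>Y. F1 (act s C, act s D) * F2 (act s D, act s E))"
      using F1 F2 s(1) CE unfolding diag_invariant_def by (intro sum.cong) auto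
    also have "\<dots> = (\<Sum>D\<in>Y. F1 (E, D) * F2 (D, C))"
      unfolding s(2,3) by (rule sum.reindex_bij_betw[OF s(4)])
    also have "\<dots> = (\<Sum>D\<in>Y. F2 (C, D) * F1 (D, E))"
      using CE sym[OF F1] sym[OF F2] by (intro sum.cong) (auto simp: mult.commute)
    also have "\<dots> = conv Y F2 F1 (C, E)"
      using CE by (simp add: conv_def)
    finally show ?thesis .
  qed
  then show ?thesis
    unfolding fun_eq_iff by (auto simp: conv_def)
qed

lemma theta_spec:
  assumes T: "csubspace T" and \<phi>: "\<phi> \<in> T" "\<forall>h\<in>H. perm_act h \<phi> = \<phi>"
    and norm: "inner_X X \<phi> \<phi> = of_real N" "N > 0"
  shows "theta H X T \<in> T \<and> (\<forall>h\<in>H. perm_act h (theta H X T) = theta H X T)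
    \<and> inner_X X (theta H X T) (theta H X T) = 1"
proof -
  let ?c = "complex_of_real (1 / sqrt N)"
  have "?c * cnj ?c * of_real N = of_real (1 / sqrt N * (1 / sqrt N) * N)"
    by (simp only: complex_cnj_complex_of_real of_real_mult)
  also have "\<dots> = 1" using norm(2) by simp
  finally have "inner_X X (cscale ?c \<phi>) (cscale ?c \<phi>) = 1"
    by (simp add: inner_X_cscale_left inner_X_cscale_right norm(1))
  moreover have "cscale ?c \<phi> \<in> T" by (rule cs.subspace_scale[OF T \<phi>(1)])
  moreover have "\<forall>h\<in>H. perm_act h (cscale ?c \<phi>) = cscale ?c \<phi>" using \<phi>(2) by simp
  ultimately have "cscale ?c \<phi> \<in> T \<and> (\<forall>h\<in>H. perm_act h (cscale ?c \<phi>) = cscale ?c \<phi>)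
      \<and> inner_X X (cscale ?c \<phi>) (cscale ?c \<phi>) = 1"
    by blast
  then show ?thesis
    unfolding theta_def
    by (rule someI[where P = "\<lambda>\<theta>. \<theta> \<in> T \<and> (\<forall>h\<in>H. perm_act h \<theta> = \<theta>) \<and> inner_X X \<theta> \<theta> = 1"])
qed

lemma psi_eq_if_fixed_line:
  assumes T: "csubspace T" and \<phi>: "\<phi> \<in> T" "\<forall>h\<in>H. perm_act h \<phi> = \<phi>"
    and norm: "inner_X X \<phi> \<phi> = of_real N" "N > 0"
    and line: "\<And>f. f \<in> T \<Longrightarrow> \<forall>h\<in>H. perm_act h f = f \<Longrightarrow> \<exists>c. f = cscale c \<phi>"
    and a: "a permutes X" and b: "b permutes X"
  shows "psi H X T (inv a \<circ> b) =
    of_nat (cdim T) / of_nat (card X) * (inner_X X (perm_act b \<phi>) (perm_act a \<phi>) / of_real N)"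
proof -
  define \<theta> where "\<theta> = theta H X T"
  have \<theta>: "\<theta> \<in> T" "\<forall>h\<in>H. perm_act h \<theta> = \<theta>" "inner_X X \<theta> \<theta> = 1"
    using theta_spec[OF T \<phi> norm] by (simp_all add: \<theta>_def)
  obtain c where c: "\<theta> = cscale c \<phi>" using line \<theta>(1,2) by blast
  have "c * cnj c * of_real N = 1"
    using \<theta>(3) by (simp add: c inner_X_cscale_left inner_X_cscale_right norm(1) mult_ac)
  then have cc: "c * cnj c = 1 / of_real N" using norm(2) by (simp add: field_simps)
  have bij: "bij a" "bij b" using a b by (simp_all add: permutes_bij)
  have "inner_X X (perm_act (inv a \<circ> b) \<theta>) \<theta>
      = inner_X X (perm_act a (perm_act (inv a \<circ> b) \<theta>)) (perm_act a \<theta>)"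
    by (rule inner_X_perm_act[OF a, symmetric])
  also have "\<dots> = inner_X X (perm_act b \<theta>) (perm_act a \<theta>)"
    by (simp add: perm_act_inv_comp[OF bij])
  also have "\<dots> = c * cnj c * inner_X X (perm_act b \<phi>) (perm_act a \<phi>)"
    by (simp add: c inner_X_cscale_left inner_X_cscale_right)
  also have "\<dots> = inner_X X (perm_act b \<phi>) (perm_act a \<phi>) / of_real N"
    by (simp add: cc)
  finally show ?thesis unfolding psi_def \<theta>_def by simp
qed

section \<open>The wreath product acting on the grid\<close>

definition swap_points :: "nat \<Rightarrow> nat \<Rightarrow> nat \<times> nat \<Rightarrow> nat \<times> nat \<Rightarrow> nat \<times> nat \<Rightarrow> nat \<times> nat" where
  "swap_points n k x y = (\<lambda>(a, b). if (a, b) \<in> Xset n k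
     then (if b \<in> {snd x, snd y} then Transposition.transpose (fst x) (fst y) a else a,
           Transposition.transpose (snd x) (snd y) b)
     else (a, b))"

locale wreath =
  fixes n k :: nat
  assumes n_ge_2: "n \<ge> 2" and k_ge_2: "k \<ge> 2"
begin

abbreviation "X \<equiv> Xset n k"
abbreviation "G \<equiv> wreathG n k"
abbreviation "H \<equiv> stabH n k"
abbreviation "col \<equiv> column n"
abbreviation "\<sigma> \<equiv> swap_points n k"

lemma finite_X: "finite X"
  by (simp add: Xset_def)

lemma card_X: "card X = n * k"
  by (simp add: Xset_def)

lemma base_point_in_X: "(1, 1) \<in> X"
  using n_ge_2 k_ge_2 by (simp add: Xset_def)

lemma top_in_X: "j \<in> {1..k} \<Longrightarrow> (1, j) \<in> X"
  using n_ge_2 by (simp add: Xset_def)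

lemma mem_column_snd: "x \<in> X \<Longrightarrow> x \<in> col (snd x)"
  by (auto simp: column_def Xset_def)

lemma card_column: "card (col j) = n"
  by (simp add: column_def)

lemma column_inj: "col j = col j' \<Longrightarrow> j = j'"
proof -
  assume "col j = col j'"
  moreover have "(1, j) \<in> col j" using n_ge_2 by (simp add: column_def)
  ultimately show "j = j'" by (simp add: column_def)
qed

lemma swap_points_apply:
  "(a, b) \<in> X \<Longrightarrow> \<sigma> x y (a, b) =
     (if b \<in> {snd x, snd y} then Transposition.transpose (fst x) (fst y) a else a,
      Transposition.transpose (snd x) (snd y) b)"
  by (simp add: swap_points_def)

lemma swap_points_outside: "z \<notin> X \<Longrightarrow> \<sigma> x y z = z"
  by (cases z) (simp add: swap_points_def)

lemma swap_points_involution: "x \<in> X \<Longrightarrow> y \<in> X \<Longrightarrow> \<sigma> x y (\<sigma> x y z) = z"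
  by (cases x; cases y; cases z) (auto simp: swap_points_def Xset_def Transposition.transpose_def)

lemma swap_points_first: "x \<in> X \<Longrightarrow> y \<in> X \<Longrightarrow> \<sigma> x y x = y"
  and swap_points_second: "x \<in> X \<Longrightarrow> y \<in> X \<Longrightarrow> \<sigma> x y y = x"
  by (cases x; cases y; auto simp: swap_points_def Xset_def Transposition.transpose_def)+

lemma swap_points_permutes: "x \<in> X \<Longrightarrow> y \<in> X \<Longrightarrow> \<sigma> x y permutes X"
  unfolding permutes_def using swap_points_outside swap_points_involution by metis

lemma inv_swap_points: "x \<in> X \<Longrightarrow> y \<in> X \<Longrightarrow> inv (\<sigma> x y) = \<sigma> x y"
  by (rule inv_unique_comp) (simp_all add: fun_eq_iff swap_points_involution)

lemma swap_points_column:
  assumes x: "x \<in> X" and y: "y \<in> X" and j: "j \<in> {1..k}"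
  shows "\<sigma> x y ` col j = col (Transposition.transpose (snd x) (snd y) j)"
proof
  show "\<sigma> x y ` col j \<subseteq> col (Transposition.transpose (snd x) (snd y) j)"
    using x y j by (cases x; cases y) (auto simp: swap_points_def Xset_def column_def Transposition.transpose_def)
  show "col (Transposition.transpose (snd x) (snd y) j) \<subseteq> \<sigma> x y ` col j"
  proof
    fix z assume "z \<in> col (Transposition.transpose (snd x) (snd y) j)"
    then have "\<sigma> x y z \<in> col j"
      using x y j by (cases x; cases y; cases z) (auto simp: swap_points_def Xset_def column_def Transposition.transpose_def)
    then show "z \<in> \<sigma> x y ` col j" using swap_points_involution[OF x y, of z] by (metis image_eqI)
  qed
qed

lemma swap_points_in_G: "x \<in> X \<Longrightarrow> y \<in> X \<Longrightarrow> \<sigma> x y \<in> G"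
proof -
  assume x: "x \<in> X" and y: "y \<in> X"
  have "Transposition.transpose (snd x) (snd y) j \<in> {1..k}" if "j \<in> {1..k}" for j
    using x y that by (auto simp: Xset_def Transposition.transpose_def)
  then show "\<sigma> x y \<in> G"
    unfolding wreathG_def using swap_points_permutes[OF x y] swap_points_column[OF x y] by blast
qed

lemma G_permutes: "g \<in> G \<Longrightarrow> g permutes X"
  by (simp add: wreathG_def)

lemma G_bij: "g \<in> G \<Longrightarrow> bij g"
  by (rule permutes_bij[OF G_permutes])

lemma G_inj: "g \<in> G \<Longrightarrow> g a = g b \<longleftrightarrow> a = b"
  using G_bij by (metis bij_is_inj injD)

lemma G_in_X: "g \<in> G \<Longrightarrow> x \<in> X \<Longrightarrow> g x \<in> X"
  by (simp add: G_permutes permutes_in_image)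

lemma G_maps_columns: "g \<in> G \<Longrightarrow> j \<in> {1..k} \<Longrightarrow> \<exists>j'\<in>{1..k}. g ` col j = col j'"
  unfolding wreathG_def by blast

lemma G_comp: assumes "g \<in> G" "h \<in> G" shows "g \<circ> h \<in> G"
  unfolding wreathG_def
proof (intro CollectI conjI ballI)
  show "g \<circ> h permutes X" using permutes_compose[OF G_permutes G_permutes] assms by blast
  fix j assume "j \<in> {1..k}"
  then obtain j1 where j1: "j1 \<in> {1..k}" "h ` col j = col j1" using G_maps_columns assms(2) by blast
  then obtain j2 where "j2 \<in> {1..k}" "g ` col j1 = col j2" using G_maps_columns assms(1) by blast
  then show "\<exists>j'\<in>{1..k}. (g \<circ> h) ` col j = col j'" using j1 by (metis image_comp)
qed

lemma G_inv: assumes g: "g \<in> G" shows "inv g \<in> G"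
  unfolding wreathG_def
proof (intro CollectI conjI ballI)
  have inj: "inj g" using G_bij[OF g] bij_is_inj by blast
  show "inv g permutes X" by (rule permutes_inv[OF G_permutes[OF g]])
  obtain J where J: "\<And>j. j \<in> {1..k} \<Longrightarrow> J j \<in> {1..k} \<and> g ` col j = col (J j)"
    using G_maps_columns[OF g] by metis
  have "inj_on J {1..k}"
  proof (rule inj_onI)
    fix a b assume "a \<in> {1..k}" "b \<in> {1..k}" "J a = J b"
    then have "g ` col a = g ` col b" using J by metis
    then show "a = b" using column_inj inj_image_eq_iff[OF inj] by metis
  qed
  then have "J ` {1..k} = {1..k}"
    by (intro endo_inj_surj) (use J in auto)
  fix j assume "j \<in> {1..k}"
  then obtain j0 where j0: "j0 \<in> {1..k}" "g ` col j0 = col j"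
    using J \<open>J ` {1..k} = {1..k}\<close> by (metis imageE)
  then have "inv g ` col j = col j0" using image_inv_f_f[OF inj] by metis
  then show "\<exists>j'\<in>{1..k}. inv g ` col j = col j'" using j0(1) by blast
qed

lemma G_image_column:
  assumes g: "g \<in> G" and x: "x \<in> X"
  shows "g ` col (snd x) = col (snd (g x))"
proof -
  have "snd x \<in> {1..k}" using x by (auto simp: Xset_def)
  then obtain j' where j': "g ` col (snd x) = col j'" using G_maps_columns[OF g] by blast
  moreover have "g x \<in> col j'" using j' mem_column_snd[OF x] by blast
  ultimately show ?thesis by (auto simp: column_def)
qed

lemma G_same_column:
  assumes g: "g \<in> G" and x: "x \<in> X" and y: "y \<in> X"
  shows "snd (g x) = snd (g y) \<longleftrightarrow> snd x = snd y"
proof -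
  have "snd (g y) = snd (g x) \<longleftrightarrow> g y \<in> g ` col (snd x)"
    using G_image_column[OF g x] G_in_X[OF g y] by (auto simp: column_def Xset_def)
  also have "\<dots> \<longleftrightarrow> snd y = snd x"
    using G_inj[OF g] y by (auto simp: column_def Xset_def)
  finally show ?thesis by auto
qed

lemma G_image_X: "g \<in> G \<Longrightarrow> g ` X = X"
  by (rule permutes_image[OF G_permutes])

lemma H_in_G: "h \<in> H \<Longrightarrow> h \<in> G"
  and H_fixes: "h \<in> H \<Longrightarrow> h (1, 1) = (1, 1)"
  by (simp_all add: stabH_def)

lemma swap_points_in_H:
  assumes "x \<in> X" "y \<in> X" "\<sigma> x y (1, 1) = (1, 1)"
  shows "\<sigma> x y \<in> H"
  using assms swap_points_in_G by (simp add: stabH_def)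

lemma orb1_eq: "orb1 n k = {z \<in> X. z = (1, 1)}"
  and orb2_eq: "orb2 n k = {z \<in> X. snd z = 1 \<and> z \<noteq> (1, 1)}"
  and orb3_eq: "orb3 n k = {z \<in> X. snd z \<noteq> 1}"
  using base_point_in_X k_ge_2 by (auto simp: orb1_def orb2_def orb3_def Xset_def)

lemma H_preserves_base_column:
  assumes h: "h \<in> H" and z: "z \<in> X"
  shows "snd (h z) = 1 \<longleftrightarrow> snd z = 1"
    and "h z = (1, 1) \<longleftrightarrow> z = (1, 1)"
  using G_same_column[OF H_in_G[OF h] z base_point_in_X] G_inj[OF H_in_G[OF h]] H_fixes[OF h]
  by (metis snd_conv)+

lemma H_orbit_eq:
  assumes x: "x \<in> Orb" and Orb: "Orb \<subseteq> X" "\<And>h z. h \<in> H \<Longrightarrow> z \<in> Orb \<Longrightarrow> h z \<in> Orb"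
    and base: "\<And>y. y \<in> Orb \<Longrightarrow> \<sigma> x y (1, 1) = (1, 1)"
  shows "(\<lambda>h. h x) ` H = Orb"
proof
  show "(\<lambda>h. h x) ` H \<subseteq> Orb" using Orb(2) x by blast
  show "Orb \<subseteq> (\<lambda>h. h x) ` H"
  proof
    fix y assume y: "y \<in> Orb"
    have "\<sigma> x y \<in> H" using swap_points_in_H Orb(1) x y base by blast
    moreover have "\<sigma> x y x = y" using swap_points_first Orb(1) x y by blast
    ultimately show "y \<in> (\<lambda>h. h x) ` H" by (metis image_eqI)
  qed
qed

lemma swap_points_fixes_base_point:
  assumes "x \<in> orb2 n k \<and> y \<in> orb2 n k \<or> x \<in> orb3 n k \<and> y \<in> orb3 n k"
  shows "\<sigma> x y (1, 1) = (1, 1)"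
  using assms base_point_in_X
  by (auto simp: swap_points_apply orb2_def orb3_def Transposition.transpose_def)

lemma H_preserves_orbj:
  assumes "h \<in> H" "z \<in> orbj n k i"
  shows "h z \<in> orbj n k i"
  using assms G_in_X[OF H_in_G[OF assms(1)]] H_preserves_base_column[OF assms(1)]
  by (auto simp: orbj_def orb1_eq orb2_eq orb3_eq split: if_splits)

lemma orbj_subset_X: "orbj n k i \<subseteq> X"
  by (auto simp: orbj_def orb1_eq orb2_eq orb3_eq)

lemma H_orbit:
  assumes "x \<in> X"
  shows "(\<lambda>h. h x) ` H = orbj n k (if x = (1, 1) then 1 else if snd x = 1 then 2 else 3)"
    (is "_ = orbj n k ?i")
proof (rule H_orbit_eq)
  show x: "x \<in> orbj n k ?i" using assms by (simp add: orbj_def orb1_eq orb2_eq orb3_eq)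
  show "orbj n k ?i \<subseteq> X" by (rule orbj_subset_X)
  show "h z \<in> orbj n k ?i" if "h \<in> H" "z \<in> orbj n k ?i" for h z
    using H_preserves_orbj that .
  fix y assume y: "y \<in> orbj n k ?i"
  show "\<sigma> x y (1, 1) = (1, 1)"
  proof (cases "x = (1, 1)")
    case True
    then show ?thesis using y base_point_in_X swap_points_second by (simp add: orbj_def orb1_def)
  next
    case False
    then show ?thesis
      using x y swap_points_fixes_base_point by (simp add: orbj_def split: if_splits)
  qed
qed

lemma H_orbits: "orbits_of H X = {orb1 n k, orb2 n k, orb3 n k}"
proof -
  have X: "(2, 1) \<in> X" "(1, 2) \<in> X" using n_ge_2 k_ge_2 by (auto simp: Xset_def)
  have "orb1 n k = (\<lambda>h. h (1, 1)) ` H" "orb2 n k = (\<lambda>h. h (2, 1)) ` H"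
    "orb3 n k = (\<lambda>h. h (1, 2)) ` H"
    using H_orbit base_point_in_X X by (simp_all add: orbj_def)
  then have "{orb1 n k, orb2 n k, orb3 n k} \<subseteq> orbits_of H X"
    unfolding orbits_of_def using base_point_in_X X by blast
  moreover have "orbits_of H X \<subseteq> {orb1 n k, orb2 n k, orb3 n k}"
    unfolding orbits_of_def using H_orbit by (auto simp: orbj_def)
  ultimately show ?thesis by blast
qed

abbreviation "Y \<equiv> coset_space G H"

lemma lcoset_subset_if_same_base_point:
  assumes a: "a \<in> G" and b: "b \<in> G" and ab: "a (1, 1) = b (1, 1)"
  shows "lcoset a H \<subseteq> lcoset b H"
proof
  fix f assume "f \<in> lcoset a H"
  then obtain h where h: "h \<in> H" "f = a \<circ> h" unfolding lcoset_def by blast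
  have inverses: "b (inv b z) = z" "inv b (b z) = z" for z
    using permutes_inverses[OF G_permutes[OF b]] by simp_all
  have "inv b \<circ> (a \<circ> h) \<in> H"
    using G_comp[OF G_inv[OF b] G_comp[OF a H_in_G[OF h(1)]]] H_fixes[OF h(1)] ab inverses
    by (simp add: stabH_def)
  moreover have "b \<circ> (inv b \<circ> (a \<circ> h)) = f" using h(2) inverses by (simp add: fun_eq_iff)
  ultimately show "f \<in> lcoset b H" unfolding lcoset_def by blast
qed

lemma coset_act_lcoset: "coset_act g (lcoset c H) = lcoset (g \<circ> c) H"
  unfolding coset_act_def lcoset_def image_image by (simp add: comp_assoc)

lemma cosets_swappable:
  assumes C: "C \<in> Y" and E: "E \<in> Y"
  shows "\<exists>s\<in>G. coset_act s C = E \<and> coset_act s E = C \<and> bij_betw (coset_act s) Y Y"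
proof -
  obtain c e where ce: "c \<in> G" "C = lcoset c H" "e \<in> G" "E = lcoset e H"
    using C E unfolding coset_space_def by blast
  define s where "s = \<sigma> (c (1, 1)) (e (1, 1))"
  have X: "c (1, 1) \<in> X" "e (1, 1) \<in> X" using G_in_X ce base_point_in_X by blast+
  have s: "s \<in> G" unfolding s_def by (rule swap_points_in_G[OF X])
  have same_coset: "lcoset a H = lcoset b H" if "a \<in> G" "b \<in> G" "a (1, 1) = b (1, 1)" for a b
    using lcoset_subset_if_same_base_point that by (metis subset_antisym)
  have ss: "s \<circ> s = id"
    unfolding fun_eq_iff comp_apply id_apply s_def using swap_points_involution[OF X] by blast
  have inv: "\<forall>D\<in>Y. coset_act s (coset_act s D) = D"
    unfolding coset_act_def image_image comp_assoc[symmetric] ss by simp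
  have maps: "coset_act s ` Y \<subseteq> Y"
    using G_comp[OF s] unfolding coset_space_def by (auto simp: coset_act_lcoset)
  have "coset_act s C = E"
    unfolding ce(2,4) coset_act_lcoset
    by (rule same_coset[OF G_comp[OF s ce(1)] ce(3)]) (simp only: comp_apply s_def swap_points_first[OF X])
  moreover have "coset_act s E = C"
    unfolding ce(2,4) coset_act_lcoset
    by (rule same_coset[OF G_comp[OF s ce(3)] ce(1)]) (simp only: comp_apply s_def swap_points_second[OF X])
  moreover have "bij_betw (coset_act s) Y Y" by (rule bij_betw_byWitness[OF inv inv maps maps])
  ultimately show ?thesis using s by blast
qed

lemma gelfand: "gelfand_pair H G"
  unfolding gelfand_pair_def using conv_commute_if_swapping cosets_swappable by blast

subsection \<open>The decomposition of the function space\<close>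

definition column_sum :: "(nat \<times> nat \<Rightarrow> complex) \<Rightarrow> nat \<Rightarrow> complex" where
  "column_sum f j = (\<Sum>i=1..n. f (i, j))"

lemma column_sum_add [simp]: "column_sum (f + g) j = column_sum f j + column_sum g j"
  and column_sum_diff [simp]: "column_sum (f - g) j = column_sum f j - column_sum g j"
  by (simp_all add: column_sum_def sum.distrib sum_subtractf)

lemma column_sum_column_constant:
  assumes "\<And>i j. (i, j) \<in> X \<Longrightarrow> f (i, j) = u j" and "j \<in> {1..k}"
  shows "column_sum f j = of_nat n * u j"
proof -
  have "column_sum f j = (\<Sum>i=1..n. u j)"
    unfolding column_sum_def by (rule sum.cong[OF refl]) (use assms in \<open>auto simp: Xset_def\<close>)
  then show ?thesis by simp
qed

lemma sum_X_by_columns: "(\<Sum>x\<in>X. f x) = (\<Sum>j=1..k. column_sum f j)"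
proof -
  have "(\<Sum>x\<in>{1..n}\<times>{1..k}. f x) = (\<Sum>i=1..n. \<Sum>j=1..k. f (i, j))"
    by (subst sum.cartesian_product) simp
  also have "\<dots> = (\<Sum>j=1..k. \<Sum>i=1..n. f (i, j))" by (rule sum.swap)
  finally show ?thesis unfolding Xset_def column_sum_def .
qed

lemma sum_X_column_constant:
  fixes f :: "nat \<times> nat \<Rightarrow> complex"
  assumes "\<And>i j. (i, j) \<in> X \<Longrightarrow> f (i, j) = u j"
  shows "(\<Sum>x\<in>X. f x) = of_nat n * (\<Sum>j=1..k. u j)"
proof -
  have "column_sum f j = of_nat n * u j" if "j \<in> {1..k}" for j
    by (rule column_sum_column_constant) (use assms that in auto)
  then show ?thesis by (simp add: sum_X_by_columns sum_distrib_left)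
qed

lemma inner_X_column_constant:
  assumes "\<And>i j. (i, j) \<in> X \<Longrightarrow> g (i, j) = w j"
  shows "inner_X X f g = (\<Sum>j=1..k. column_sum f j * cnj (w j))"
proof -
  have "inner_X X f g = (\<Sum>x\<in>X. f x * cnj (w (snd x)))"
    unfolding inner_X_def using assms by (intro sum.cong) auto
  also have "\<dots> = (\<Sum>j=1..k. column_sum f j * cnj (w j))"
    unfolding sum_X_by_columns column_sum_def by (simp add: sum_distrib_right)
  finally show ?thesis .
qed

lemma Tcol_eq:
  "Tcol n k = {f \<in> funsp X. (\<forall>x\<in>X. \<forall>y\<in>X. snd x = snd y \<longrightarrow> f x = f y) \<and> (\<Sum>x\<in>X. f x) = 0}"
proof (intro equalityI subsetI)
  fix f assume "f \<in> Tcol n k"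
  then obtain u where u: "(\<Sum>j=1..k. u j) = 0" "\<forall>(i, j)\<in>X. f (i, j) = u j" and f: "f \<in> funsp X"
    unfolding Tcol_def by blast
  have fu: "f (i, j) = u j" if "(i, j) \<in> X" for i j using u(2) that by blast
  have "f x = f y" if "x \<in> X" "y \<in> X" "snd x = snd y" for x y
    using fu[of "fst x" "snd x"] fu[of "fst y" "snd y"] that by (metis prod.collapse)
  moreover have "(\<Sum>x\<in>X. f x) = of_nat n * (\<Sum>j=1..k. u j)"
    by (rule sum_X_column_constant) (rule fu)
  then have "(\<Sum>x\<in>X. f x) = 0" using u(1) by simp
  ultimately show "f \<in> {f \<in> funsp X. (\<forall>x\<in>X. \<forall>y\<in>X. snd x = snd y \<longrightarrow> f x = f y) \<and> (\<Sum>x\<in>X. f x) = 0}"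
    using f by blast
next
  fix f assume "f \<in> {f \<in> funsp X. (\<forall>x\<in>X. \<forall>y\<in>X. snd x = snd y \<longrightarrow> f x = f y) \<and> (\<Sum>x\<in>X. f x) = 0}"
  then have f: "f \<in> funsp X" and const: "\<forall>x\<in>X. \<forall>y\<in>X. snd x = snd y \<longrightarrow> f x = f y"
    and sum: "(\<Sum>x\<in>X. f x) = 0"
    by blast+
  have fu: "f (i, j) = f (1, j)" if "(i, j) \<in> X" for i j
  proof -
    have "(1, j) \<in> X" using that n_ge_2 by (auto simp: Xset_def)
    then show ?thesis using const that by (metis snd_conv)
  qed
  have "(\<Sum>x\<in>X. f x) = of_nat n * (\<Sum>j=1..k. f (1, j))"
    by (rule sum_X_column_constant) (rule fu)
  then have "of_nat n * (\<Sum>j=1..k. f (1, j)) = 0" using sum by simp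
  then have "(\<Sum>j=1..k. f (1, j)) = 0" using n_ge_2 by simp
  then show "f \<in> Tcol n k" unfolding Tcol_def using f fu by blast
qed

definition col_diff :: "nat \<Rightarrow> nat \<Rightarrow> nat \<times> nat \<Rightarrow> complex" where
  "col_diff a b = indicator (col a) - indicator (col b)"

lemma col_diff_apply:
  "col_diff a b (i, j) = (if i \<in> {1..n} \<and> j = a then 1 else 0) - (if i \<in> {1..n} \<and> j = b then 1 else 0)"
  by (simp add: col_diff_def column_def indicator_def)

lemma col_diff_in_Tcol:
  assumes "a \<in> {1..k}" "b \<in> {1..k}"
  shows "col_diff a b \<in> Tcol n k"
proof -
  define u where "u j = (if j = a then 1 else 0) - (if j = b then 1 else (0::complex))" for j
  have "(\<Sum>j=1..k. u j) = 0" using assms by (simp add: u_def sum_subtractf)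
  moreover have "\<forall>(i, j)\<in>X. col_diff a b (i, j) = u j" by (auto simp: col_diff_apply u_def Xset_def)
  moreover have "col_diff a b \<in> funsp X" using assms by (auto simp: col_diff_apply funsp_def Xset_def)
  ultimately show ?thesis unfolding Tcol_def by blast
qed

lemma inner_X_col_diff:
  assumes "a \<in> {1..k}" "b \<in> {1..k}"
  shows "inner_X X f (col_diff a b) = column_sum f a - column_sum f b"
proof -
  have "inner_X X f (col_diff a b)
      = (\<Sum>j=1..k. column_sum f j * cnj ((if j = a then 1 else 0) - (if j = b then 1 else 0)))"
    by (rule inner_X_column_constant) (auto simp: col_diff_apply Xset_def)
  also have "\<dots> = (\<Sum>j=1..k. (if j = a then column_sum f j else 0) - (if j = b then column_sum f j else 0))"
    by (intro sum.cong) auto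
  also have "\<dots> = column_sum f a - column_sum f b" using assms by (simp add: sum_subtractf)
  finally show ?thesis .
qed

lemma Trest_eq: "Trest n k = {f \<in> funsp X. \<forall>j\<in>{1..k}. column_sum f j = 0}"
proof (intro equalityI subsetI)
  fix f assume f: "f \<in> Trest n k"
  have orth: "inner_X X f g = 0" if "g \<in> Tconst n k \<union> Tcol n k" for g
    using f that by (simp add: Trest_def)
  have one: "1 \<in> {1..k}" using k_ge_2 by simp
  have same: "column_sum f j = column_sum f 1" if j: "j \<in> {1..k}" for j
    using orth[of "col_diff j 1"] col_diff_in_Tcol[OF j one] inner_X_col_diff[OF j one] by simp
  have "indicator X \<in> Tconst n k" by (simp add: Tconst_def funsp_def)
  moreover have "inner_X X f (indicator X) = (\<Sum>j=1..k. column_sum f j * cnj 1)"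
    by (rule inner_X_column_constant) simp
  ultimately have "(\<Sum>j=1..k. column_sum f j) = 0" using orth by simp
  also have "(\<Sum>j=1..k. column_sum f j) = (\<Sum>j=1..k. column_sum f 1)"
    by (rule sum.cong[OF refl same])
  finally have "column_sum f 1 = 0" using k_ge_2 by simp
  then show "f \<in> {f \<in> funsp X. \<forall>j\<in>{1..k}. column_sum f j = 0}" using same f by (simp add: Trest_def)
next
  fix f assume f: "f \<in> {f \<in> funsp X. \<forall>j\<in>{1..k}. column_sum f j = 0}"
  have "inner_X X f g = 0" if g: "g \<in> Tconst n k \<union> Tcol n k" for g
  proof -
    obtain w where "\<And>i j. (i, j) \<in> X \<Longrightarrow> g (i, j) = w j"
    proof (cases "g \<in> Tconst n k")
      case True
      then obtain c where "\<forall>x\<in>X. g x = c" by (auto simp: Tconst_def)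
      then show ?thesis using that[of "\<lambda>_. c"] by blast
    next
      case False
      then obtain u where "\<forall>(i, j)\<in>X. g (i, j) = u j" using g by (auto simp: Tcol_def)
      then show ?thesis using that[of u] by blast
    qed
    then show ?thesis using f by (simp add: inner_X_column_constant)
  qed
  then show "f \<in> Trest n k" using f by (simp add: Trest_def)
qed

definition "mean f = (\<Sum>x\<in>X. f x) / of_nat (n * k)"
definition "const_part f = (\<lambda>x. if x \<in> X then mean f else 0)"
definition "col_part f = (\<lambda>x. if x \<in> X then column_sum f (snd x) / of_nat n - mean f else 0)"
definition "rest_part f = f - const_part f - col_part f"

lemma const_part_add: "const_part (f + g) = const_part f + const_part g"
  and col_part_add: "col_part (f + g) = col_part f + col_part g"
  by (simp_all add: const_part_def col_part_def mean_def sum.distrib add_divide_distrib fun_eq_iff)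

lemma parts_of_Tconst:
  assumes "g \<in> Tconst n k"
  shows "const_part g = g" and "col_part g = 0"
proof -
  obtain c where c: "\<forall>x\<in>X. g x = c" and g: "g \<in> funsp X" using assms by (auto simp: Tconst_def)
  have gc: "g (i, j) = c" if "(i, j) \<in> X" for i j using c that by blast
  have "(\<Sum>x\<in>X. g x) = of_nat n * (\<Sum>j=1..k. c)" by (rule sum_X_column_constant) (rule gc)
  then have "mean g = c" using n_ge_2 k_ge_2 by (simp add: mean_def)
  moreover have "column_sum g (snd x) = of_nat n * c" if "x \<in> X" for x
    by (rule column_sum_column_constant) (use gc that in \<open>auto simp: Xset_def\<close>)
  ultimately show "const_part g = g" "col_part g = 0"
    using c funspD[OF g] n_ge_2 by (auto simp: const_part_def col_part_def fun_eq_iff)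
qed

lemma parts_of_Tcol:
  assumes "g \<in> Tcol n k"
  shows "const_part g = 0" and "col_part g = g"
proof -
  obtain u where u: "(\<Sum>j=1..k. u j) = 0" "\<forall>(i, j)\<in>X. g (i, j) = u j" and g: "g \<in> funsp X"
    using assms unfolding Tcol_def by blast
  have gu: "g (i, j) = u j" if "(i, j) \<in> X" for i j using u(2) that by blast
  have "(\<Sum>x\<in>X. g x) = of_nat n * (\<Sum>j=1..k. u j)" by (rule sum_X_column_constant) (rule gu)
  then have "mean g = 0" using u(1) by (simp add: mean_def)
  moreover have "column_sum g (snd x) = of_nat n * g x" if "x \<in> X" for x
  proof -
    have "column_sum g (snd x) = of_nat n * u (snd x)"
      by (rule column_sum_column_constant) (use gu that in \<open>auto simp: Xset_def\<close>)
    then show ?thesis using gu[of "fst x" "snd x"] that by simp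
  qed
  ultimately show "const_part g = 0" "col_part g = g"
    using funspD[OF g] n_ge_2 by (auto simp: const_part_def col_part_def fun_eq_iff)
qed

lemma parts_of_Trest:
  assumes "g \<in> Trest n k"
  shows "const_part g = 0" and "col_part g = 0"
proof -
  have sums: "\<forall>j\<in>{1..k}. column_sum g j = 0" using assms by (simp add: Trest_eq)
  then have "mean g = 0" by (simp add: mean_def sum_X_by_columns)
  then show "const_part g = 0" "col_part g = 0"
    using sums by (auto simp: const_part_def col_part_def fun_eq_iff Xset_def)
qed

lemma const_part_in_Tconst: "const_part f \<in> Tconst n k"
  by (auto simp: Tconst_def funsp_def const_part_def)

lemma col_part_in_Tcol: "col_part f \<in> Tcol n k"
proof -
  define u where "u j = column_sum f j / of_nat n - mean f" for j
  have "(\<Sum>j=1..k. u j) = (\<Sum>j=1..k. column_sum f j) / of_nat n - of_nat k * mean f"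
    by (simp add: u_def sum_subtractf sum_divide_distrib)
  also have "\<dots> = 0"
    unfolding mean_def sum_X_by_columns[symmetric] using n_ge_2 k_ge_2 by simp
  finally show ?thesis unfolding Tcol_def funsp_def col_part_def u_def by auto
qed

lemma rest_part_in_Trest:
  assumes f: "f \<in> funsp X"
  shows "rest_part f \<in> Trest n k"
proof -
  have "column_sum (rest_part f) j = 0" if j: "j \<in> {1..k}" for j
  proof -
    have "column_sum (const_part f) j = of_nat n * mean f"
      by (rule column_sum_column_constant[OF _ j]) (simp add: const_part_def)
    moreover have "column_sum (col_part f) j = of_nat n * (column_sum f j / of_nat n - mean f)"
      by (rule column_sum_column_constant[OF _ j]) (simp add: col_part_def)
    moreover have "(of_nat n :: complex) \<noteq> 0" using n_ge_2 by simp
    ultimately show ?thesis unfolding rest_part_def by (simp add: field_simps)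
  qed
  moreover have "rest_part f \<in> funsp X"
    using f by (auto simp: funsp_def rest_part_def const_part_def col_part_def)
  ultimately show ?thesis unfolding Trest_eq by simp
qed

lemma direct_sum_decomposition: "direct_sum3 (funsp X) (Tconst n k) (Tcol n k) (Trest n k)"
  unfolding direct_sum3_def
proof (intro conjI ballI)
  show "Tconst n k \<subseteq> funsp X" "Tcol n k \<subseteq> funsp X" "Trest n k \<subseteq> funsp X"
    by (auto simp: Tconst_def Tcol_def Trest_def)
  fix f assume f: "f \<in> funsp X"
  have unique: "g1 = const_part f \<and> g2 = col_part f \<and> g3 = rest_part f"
    if "g1 \<in> Tconst n k" "g2 \<in> Tcol n k" "g3 \<in> Trest n k" "f = g1 + g2 + g3" for g1 g2 g3
    using that parts_of_Tconst[OF that(1)] parts_of_Tcol[OF that(2)] parts_of_Trest[OF that(3)]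
    by (simp add: const_part_add col_part_add rest_part_def)
  show "\<exists>!(f1, f2, f3). f1 \<in> Tconst n k \<and> f2 \<in> Tcol n k \<and> f3 \<in> Trest n k \<and> f = f1 + f2 + f3"
    using const_part_in_Tconst col_part_in_Tcol rest_part_in_Trest[OF f] unique
    by (intro ex1I[of _ "(const_part f, col_part f, rest_part f)"]) (auto simp: rest_part_def)
qed

definition point_diff :: "nat \<times> nat \<Rightarrow> nat \<times> nat \<Rightarrow> nat \<times> nat \<Rightarrow> complex" where
  "point_diff p q = indicator {p} - indicator {q}"

lemma point_diff_apply: "point_diff p q z = (if z = p then 1 else 0) - (if z = q then 1 else 0)"
  by (simp add: point_diff_def indicator_def)

lemma col_diff_dual:
  "j \<in> {2..k} \<Longrightarrow> j' \<in> {2..k} \<Longrightarrow> col_diff j 1 (1, j') = (if j = j' then 1 else 0)"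
  using n_ge_2 by (auto simp: col_diff_apply)

lemma point_diff_dual:
  "p \<in> {2..n} \<times> {1..k} \<Longrightarrow> p' \<in> {2..n} \<times> {1..k} \<Longrightarrow>
     point_diff p (1, snd p) p' = (if p = p' then 1 else 0)"
  by (auto simp: point_diff_apply)

lemma Tcol_span: "Tcol n k \<subseteq> cs.span ((\<lambda>j. col_diff j 1) ` {2..k})"
proof
  fix f assume "f \<in> Tcol n k"
  then obtain u where u: "(\<Sum>j=1..k. u j) = 0" "\<forall>(i, j)\<in>X. f (i, j) = u j" and f: "f \<in> funsp X"
    by (auto simp: Tcol_def)
  have "{1..k} = insert 1 {2..k}" using k_ge_2 by auto
  then have u1: "u 1 = - (\<Sum>j=2..k. u j)" using u(1) by (simp add: eq_neg_iff_add_eq_0)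
  have "f = (\<Sum>j\<in>{2..k}. cscale (u j) (col_diff j 1))"
  proof
    fix x :: "nat \<times> nat"
    obtain a b where x: "x = (a, b)" by (cases x)
    have "(\<Sum>j\<in>{2..k}. cscale (u j) (col_diff j 1)) x
        = (\<Sum>j\<in>{2..k}. u j * ((if a \<in> {1..n} \<and> b = j then 1 else 0)
            - (if a \<in> {1..n} \<and> b = 1 then 1 else 0)))"
      unfolding sum_fun_apply x by (simp add: col_diff_apply)
    also have "\<dots> = (if a \<in> {1..n} \<and> b \<in> {2..k} then u b else 0)
        - (if a \<in> {1..n} \<and> b = 1 then (\<Sum>j=2..k. u j) else 0)"
      by (simp add: right_diff_distrib sum_subtractf if_distrib[of "\<lambda>z. _ * z"] cong: if_cong)
        (auto intro!: sum.neutral)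
    also have "\<dots> = f x"
      using u(2) u1 f x by (cases "x \<in> X") (auto simp: Xset_def funsp_def)
    finally show "f x = (\<Sum>j\<in>{2..k}. cscale (u j) (col_diff j 1)) x" by simp
  qed
  also have "\<dots> \<in> cs.span ((\<lambda>j. col_diff j 1) ` {2..k})"
    by (intro cs.span_sum cs.span_scale cs.span_base) auto
  finally show "f \<in> cs.span ((\<lambda>j. col_diff j 1) ` {2..k})" .
qed

lemma dim_Tcol: "cdim (Tcol n k) = k - 1"
proof (rule cs.dim_unique[OF _ Tcol_span])
  show "(\<lambda>j. col_diff j 1) ` {2..k} \<subseteq> Tcol n k" using col_diff_in_Tcol by auto
  show "cs.independent ((\<lambda>j. col_diff j 1) ` {2..k})"
    by (rule independent_if_dual_points(2)[where p = "\<lambda>j. (1, j)"]) (rule col_diff_dual)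
  have "inj_on (\<lambda>j. col_diff j 1) {2..k}"
    by (rule independent_if_dual_points(1)[where p = "\<lambda>j. (1, j)"]) (rule col_diff_dual)
  then show "card ((\<lambda>j. col_diff j 1) ` {2..k}) = k - 1" by (simp add: card_image)
qed

lemma point_diff_in_Trest:
  assumes "p \<in> X" "q \<in> X" "snd p = snd q"
  shows "point_diff p q \<in> Trest n k"
proof -
  have "column_sum (point_diff p q) j = 0" for j
    unfolding column_sum_def point_diff_apply using assms
    by (cases p; cases q; cases "j = snd p") (simp_all add: sum_subtractf Xset_def)
  moreover have "point_diff p q \<in> funsp X" using assms by (auto simp: point_diff_apply funsp_def)
  ultimately show ?thesis unfolding Trest_eq by simp
qed

lemma Trest_span: "Trest n k \<subseteq> cs.span ((\<lambda>p. point_diff p (1, snd p)) ` ({2..n} \<times> {1..k}))"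
proof
  fix f assume "f \<in> Trest n k"
  then have f: "f \<in> funsp X" and sums: "\<forall>j\<in>{1..k}. column_sum f j = 0" by (auto simp: Trest_eq)
  have top: "f (1, b) = - (\<Sum>i=2..n. f (i, b))" if b: "b \<in> {1..k}" for b
  proof -
    have "{1..n} = insert 1 {2..n}" using n_ge_2 by auto
    then show ?thesis using sums b by (simp add: column_sum_def eq_neg_iff_add_eq_0)
  qed
  have "f = (\<Sum>p\<in>{2..n}\<times>{1..k}. cscale (f p) (point_diff p (1, snd p)))"
  proof
    fix x :: "nat \<times> nat"
    obtain a b where x: "x = (a, b)" by (cases x)
    have "(\<Sum>p\<in>{2..n}\<times>{1..k}. cscale (f p) (point_diff p (1, snd p))) x =
        (\<Sum>p\<in>{2..n}\<times>{1..k}. (if p = (a, b) then f p else 0) - (if a = 1 \<and> snd p = b then f p else 0))"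
      unfolding sum_fun_apply x by (intro sum.cong) (auto simp: point_diff_apply)
    also have "\<dots> = (if (a, b) \<in> {2..n}\<times>{1..k} then f (a, b) else 0) -
        (\<Sum>p\<in>{2..n}\<times>{1..k}. (if a = 1 \<and> snd p = b then f p else 0))"
      by (simp add: sum_subtractf)
    also have "(\<Sum>p\<in>{2..n}\<times>{1..k}. (if a = 1 \<and> snd p = b then f p else 0)) =
        (\<Sum>i=2..n. \<Sum>j=1..k. (if a = 1 \<and> j = b then f (i, j) else 0))"
      by (subst sum.cartesian_product) (rule sum.cong; auto)
    also have "\<dots> = (\<Sum>i=2..n. if a = 1 \<and> b \<in> {1..k} then f (i, b) else 0)"
      by (intro sum.cong refl) (auto simp: if_distrib cong: if_cong)
    also have "(if (a, b) \<in> {2..n}\<times>{1..k} then f (a, b) else 0) - \<dots> = f x"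
      using f x top by (cases "x \<in> X"; cases "a = 1") (auto simp: funsp_def Xset_def)
    finally show "f x = (\<Sum>p\<in>{2..n}\<times>{1..k}. cscale (f p) (point_diff p (1, snd p))) x"
      by (rule sym)
  qed
  also have "\<dots> \<in> cs.span ((\<lambda>p. point_diff p (1, snd p)) ` ({2..n} \<times> {1..k}))"
    by (intro cs.span_sum cs.span_scale cs.span_base) auto
  finally show "f \<in> cs.span ((\<lambda>p. point_diff p (1, snd p)) ` ({2..n} \<times> {1..k}))" .
qed

lemma dim_Trest: "cdim (Trest n k) = (n - 1) * k"
proof (rule cs.dim_unique[OF _ Trest_span])
  show "(\<lambda>p. point_diff p (1, snd p)) ` ({2..n} \<times> {1..k}) \<subseteq> Trest n k"
    using point_diff_in_Trest top_in_X by (auto simp: Xset_def)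
  show "cs.independent ((\<lambda>p. point_diff p (1, snd p)) ` ({2..n} \<times> {1..k}))"
    by (rule independent_if_dual_points(2)[where p = "\<lambda>p. p"]) (rule point_diff_dual)
  have "inj_on (\<lambda>p. point_diff p (1, snd p)) ({2..n} \<times> {1..k})"
    by (rule independent_if_dual_points(1)[where p = "\<lambda>p. p"]) (rule point_diff_dual)
  then show "card ((\<lambda>p. point_diff p (1, snd p)) ` ({2..n} \<times> {1..k})) = (n - 1) * k"
    by (simp add: card_image)
qed

lemma dim_Tconst: "cdim (Tconst n k) = 1"
proof (rule cs.dim_unique[of "{indicator X}"])
  show "{indicator X} \<subseteq> Tconst n k" by (auto simp: Tconst_def funsp_def)
  show "Tconst n k \<subseteq> cs.span {indicator X}"
  proof
    fix f assume "f \<in> Tconst n k"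
    then obtain c where "\<forall>x\<in>X. f x = c" "f \<in> funsp X" by (auto simp: Tconst_def)
    then have "f = cscale c (indicator X)" by (auto simp: fun_eq_iff funsp_def indicator_def)
    then show "f \<in> cs.span {indicator X}" by (simp add: cs.span_base cs.span_scale)
  qed
  have "indicator X (1, 1) \<noteq> (0 :: complex)" using base_point_in_X by simp
  then show "cs.independent {indicator X :: nat \<times> nat \<Rightarrow> complex}" by (auto simp: fun_eq_iff)
qed simp

subsection \<open>Irreducibility and non-isomorphism\<close>

lemma Tconst_fixed: "g \<in> G \<Longrightarrow> f \<in> Tconst n k \<Longrightarrow> perm_act g f = f"
  unfolding Tconst_def using perm_act_funsp_const[OF G_permutes] by blast

lemma Tconst_invariant: "G_invariant_sub G (Tconst n k)"
  unfolding G_invariant_sub_def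
  by (intro conjI ballI cs.subspaceI) (auto simp: Tconst_def funsp_def Tconst_fixed)

lemma Tcol_subspace: "csubspace (Tcol n k)"
proof (rule cs.subspaceI)
  show "0 \<in> Tcol n k" unfolding Tcol_def funsp_def by (intro CollectI conjI exI[of _ "\<lambda>_. 0"]) auto
next
  fix f g assume "f \<in> Tcol n k" "g \<in> Tcol n k"
  then obtain u v where u: "(\<Sum>j=1..k. u j) = 0" "\<forall>(i, j)\<in>X. f (i, j) = u j" "f \<in> funsp X"
    and v: "(\<Sum>j=1..k. v j) = 0" "\<forall>(i, j)\<in>X. g (i, j) = v j" "g \<in> funsp X"
    unfolding Tcol_def by blast
  have "(f + g) (i, j) = u j + v j" if "(i, j) \<in> X" for i j
    using bspec[OF u(2) that] bspec[OF v(2) that] by simp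
  then show "f + g \<in> Tcol n k"
    unfolding Tcol_def using u v
    by (intro CollectI conjI exI[of _ "\<lambda>j. u j + v j"]) (auto simp: funsp_def sum.distrib)
next
  fix c f assume "f \<in> Tcol n k"
  then obtain u where u: "(\<Sum>j=1..k. u j) = 0" "\<forall>(i, j)\<in>X. f (i, j) = u j" "f \<in> funsp X"
    unfolding Tcol_def by blast
  have "cscale c f (i, j) = c * u j" if "(i, j) \<in> X" for i j
    using bspec[OF u(2) that] by simp
  then show "cscale c f \<in> Tcol n k"
    unfolding Tcol_def using u
    by (intro CollectI conjI exI[of _ "\<lambda>j. c * u j"]) (auto simp: funsp_def sum_distrib_left[symmetric])
qed

lemma Tcol_invariant: "G_invariant_sub G (Tcol n k)"
  unfolding G_invariant_sub_def
proof (intro conjI ballI Tcol_subspace)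
  fix g f assume g: "g \<in> G" and "f \<in> Tcol n k"
  then have f: "f \<in> funsp X" "\<forall>x\<in>X. \<forall>y\<in>X. snd x = snd y \<longrightarrow> f x = f y" "(\<Sum>x\<in>X. f x) = 0"
    unfolding Tcol_eq by blast+
  have ig: "inv g \<in> G" by (rule G_inv[OF g])
  have "perm_act g f x = perm_act g f y" if "x \<in> X" "y \<in> X" "snd x = snd y" for x y
    unfolding perm_act_def using f(2) G_same_column[OF ig] G_in_X[OF ig] that by blast
  moreover have "(\<Sum>x\<in>X. perm_act g f x) = 0"
    using f(3) inner_X_perm_act[OF G_permutes[OF g], of f "indicator X"]
    by (simp add: inner_X_def perm_act_indicator[OF G_bij[OF g]] G_image_X[OF g])
  ultimately show "perm_act g f \<in> Tcol n k"
    unfolding Tcol_eq using perm_act_funsp[OF G_permutes[OF g] f(1)] by blast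
qed

lemma Trest_invariant: "G_invariant_sub G (Trest n k)"
  unfolding G_invariant_sub_def
proof (intro conjI ballI)
  show "csubspace (Trest n k)"
    unfolding Trest_eq
    by (rule cs.subspaceI) (simp_all add: funsp_def column_sum_def sum.distrib sum_distrib_left[symmetric])
  fix g f assume g: "g \<in> G" and f: "f \<in> Trest n k"
  have "inner_X X (perm_act g f) h = 0" if h: "h \<in> Tconst n k \<union> Tcol n k" for h
  proof -
    have "perm_act (inv g) h \<in> Tconst n k \<union> Tcol n k"
      using h G_inv[OF g] Tconst_invariant Tcol_invariant G_invariant_sub_perm_act by blast
    then show ?thesis
      using f inner_X_perm_act_left[OF G_permutes[OF g]] by (simp add: Trest_def)
  qed
  then show "perm_act g f \<in> Trest n k"
    using f perm_act_funsp[OF G_permutes[OF g]] by (simp add: Trest_def)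
qed

lemma perm_act_col_diff:
  assumes "x \<in> X" "y \<in> X" "a \<in> {1..k}" "b \<in> {1..k}"
  shows "perm_act (\<sigma> x y) (col_diff a b)
    = col_diff (Transposition.transpose (snd x) (snd y) a) (Transposition.transpose (snd x) (snd y) b)"
  unfolding col_diff_def using assms
  by (simp add: perm_act_indicator G_bij swap_points_in_G swap_points_column)

lemma perm_act_point_diff: "g \<in> G \<Longrightarrow> perm_act g (point_diff p q) = point_diff (g p) (g q)"
  unfolding point_diff_def by (simp add: perm_act_indicator G_bij)

lemma col_diff_transpose:
  assumes U: "G_invariant_sub G U" and ab: "col_diff a b \<in> U" "a \<in> {1..k}" "b \<in> {1..k}"
    and cd: "c \<in> {1..k}" "d \<in> {1..k}"
  shows "col_diff (Transposition.transpose c d a) (Transposition.transpose c d b) \<in> U"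
proof -
  have "perm_act (\<sigma> (1, c) (1, d)) (col_diff a b) \<in> U"
    by (rule G_invariant_sub_perm_act[OF U swap_points_in_G[OF top_in_X[OF cd(1)] top_in_X[OF cd(2)]] ab(1)])
  then show ?thesis
    using perm_act_col_diff[OF top_in_X[OF cd(1)] top_in_X[OF cd(2)] ab(2,3)] by simp
qed

lemma col_diff_generates:
  assumes U: "G_invariant_sub G U" and ab: "col_diff a b \<in> U" "a \<in> {1..k}" "b \<in> {1..k}" "a \<noteq> b"
    and j: "j \<in> {2..k}"
  shows "col_diff j 1 \<in> U"
proof -
  define b' where "b' = Transposition.transpose a j b"
  have j': "j \<in> {1..k}" "j \<noteq> 1" and one: "1 \<in> {1..k}" using j k_ge_2 by auto
  have b': "b' \<in> {1..k}" "b' \<noteq> j" using ab j' by (auto simp: b'_def Transposition.transpose_def)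
  have "col_diff (Transposition.transpose a j a) (Transposition.transpose a j b) \<in> U"
    by (rule col_diff_transpose[OF U ab(1-3) ab(2) j'(1)])
  then have "col_diff j b' \<in> U" by (simp add: b'_def)
  then have "col_diff (Transposition.transpose b' 1 j) (Transposition.transpose b' 1 b') \<in> U"
    by (rule col_diff_transpose[OF U _ j'(1) b'(1) b'(1) one])
  then show ?thesis using b'(2) j'(2) by simp
qed

lemma point_diff_generates:
  assumes U: "G_invariant_sub G U"
    and pq: "point_diff p q \<in> U" "p \<in> X" "q \<in> X" "p \<noteq> q" "snd p = snd q"
    and t: "t \<in> {2..n} \<times> {1..k}"
  shows "point_diff t (1, snd t) \<in> U"
proof -
  obtain a b where t': "t = (a, b)" "a \<in> {2..n}" "b \<in> {1..k}" using t by auto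
  have tX: "t \<in> X" using t by (auto simp: Xset_def)
  define s where "s = \<sigma> p t"
  have s: "s \<in> G" "s p = t"
    unfolding s_def by (rule swap_points_in_G[OF pq(2) tX], rule swap_points_first[OF pq(2) tX])
  define q' where "q' = s q"
  have q': "q' \<in> X" "q' \<noteq> t" "snd q' = b"
    using G_in_X[OF s(1) pq(3)] G_inj[OF s(1), of q p] G_same_column[OF s(1) pq(3) pq(2)] pq(4,5) s(2) t'(1)
    by (simp_all add: q'_def)
  have "point_diff (s p) (s q) \<in> U"
    using G_invariant_sub_perm_act[OF U s(1) pq(1)] by (simp add: perm_act_point_diff[OF s(1)])
  then have "point_diff t q' \<in> U" by (simp add: s(2) q'_def)
  define r where "r = \<sigma> q' (1, b)"
  have r: "r \<in> G" "r q' = (1, b)"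
    unfolding r_def by (rule swap_points_in_G[OF q'(1) top_in_X[OF t'(3)]],
      rule swap_points_first[OF q'(1) top_in_X[OF t'(3)]])
  have "fst q' \<noteq> a" using q'(2,3) t'(1) by (metis prod.collapse)
  then have "r t = t"
    using t' tX q'(3) by (simp add: r_def swap_points_apply Transposition.transpose_def)
  have "point_diff (r t) (r q') \<in> U"
    using G_invariant_sub_perm_act[OF U r(1) \<open>point_diff t q' \<in> U\<close>]
    by (simp add: perm_act_point_diff[OF r(1)])
  then show ?thesis using \<open>r t = t\<close> r(2) t'(1) by simp
qed

lemma column_swap_difference:
  assumes f: "f \<in> funsp X" "\<And>i j. (i, j) \<in> X \<Longrightarrow> f (i, j) = u j"
    and ab: "a \<in> {1..k}" "b \<in> {1..k}" "a \<noteq> b"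
  shows "f - perm_act (\<sigma> (1, a) (1, b)) f = cscale (u a - u b) (col_diff a b)"
proof
  fix x :: "nat \<times> nat"
  obtain i j where x: "x = (i, j)" by (cases x)
  have inv: "inv (\<sigma> (1, a) (1, b)) = \<sigma> (1, a) (1, b)"
    by (rule inv_swap_points[OF top_in_X[OF ab(1)] top_in_X[OF ab(2)]])
  show "(f - perm_act (\<sigma> (1, a) (1, b)) f) x = cscale (u a - u b) (col_diff a b) x"
  proof (cases "x \<in> X")
    case True
    then have ij: "i \<in> {1..n}" "j \<in> {1..k}" using x by (auto simp: Xset_def)
    have "\<sigma> (1, a) (1, b) x = (i, Transposition.transpose a b j)"
      using True x by (simp add: swap_points_apply Transposition.transpose_def)
    moreover have "(i, Transposition.transpose a b j) \<in> X"
      using ij ab by (auto simp: Xset_def Transposition.transpose_def)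
    ultimately show ?thesis
      using f(2) True ij ab(3) unfolding x perm_act_def inv
      by (auto simp: col_diff_apply Transposition.transpose_def)
  next
    case False
    then show ?thesis
      using funspD[OF f(1) False] x ab unfolding perm_act_def inv
      by (auto simp: swap_points_outside col_diff_apply Xset_def)
  qed
qed

lemma point_swap_difference:
  assumes f: "f \<in> funsp X" and pq: "p \<in> X" "q \<in> X" "snd p = snd q"
  shows "f - perm_act (\<sigma> p q) f = cscale (f p - f q) (point_diff p q)"
proof
  fix z :: "nat \<times> nat"
  have inv: "inv (\<sigma> p q) = \<sigma> p q" by (rule inv_swap_points[OF pq(1,2)])
  have "\<sigma> p q z = (if z = p then q else if z = q then p else z)"
    using pq by (cases p; cases q; cases z) (auto simp: swap_points_def Xset_def Transposition.transpose_def)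
  then show "(f - perm_act (\<sigma> p q) f) z = cscale (f p - f q) (point_diff p q) z"
    unfolding perm_act_def inv by (auto simp: point_diff_apply)
qed

lemma column_values_nonconstant:
  assumes f: "f \<in> funsp X" "\<And>i j. (i, j) \<in> X \<Longrightarrow> f (i, j) = u j"
    and u: "(\<Sum>j=1..k. u j) = 0" and "f \<noteq> 0"
  shows "\<exists>a\<in>{1..k}. \<exists>b\<in>{1..k}. u a \<noteq> u b"
proof (rule ccontr)
  assume "\<not> ?thesis"
  moreover have "1 \<in> {1..k}" using k_ge_2 by simp
  ultimately have same: "u j = u 1" if "j \<in> {1..k}" for j using that by blast
  have "(\<Sum>j=1..k. u j) = (\<Sum>j=1..k. u 1)" by (rule sum.cong[OF refl same])
  then have "of_nat k * u 1 = 0" using u by simp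
  then have "u j = 0" if "j \<in> {1..k}" for j using same[OF that] k_ge_2 by simp
  then have "f x = 0" for x
    using f funspD[OF f(1), of x] by (cases x) (auto simp: Xset_def)
  then show False using \<open>f \<noteq> 0\<close> by auto
qed

lemma Trest_nonconstant_in_column:
  assumes "f \<in> Trest n k" "f \<noteq> 0"
  obtains p q where "p \<in> X" "q \<in> X" "snd q = snd p" "f q \<noteq> f p"
proof -
  have fX: "f \<in> funsp X" and sums: "\<forall>j\<in>{1..k}. column_sum f j = 0"
    using assms(1) unfolding Trest_eq by auto
  have "\<exists>p\<in>X. f p \<noteq> 0"
  proof (rule ccontr)
    assume "\<not> (\<exists>p\<in>X. f p \<noteq> 0)"
    then have "f x = 0" for x using funspD[OF fX, of x] by (cases "x \<in> X") simp_all
    then show False using assms(2) by (simp add: fun_eq_iff)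
  qed
  then obtain p where p: "p \<in> X" "f p \<noteq> 0" by blast
  have "\<exists>q\<in>X. snd q = snd p \<and> f q \<noteq> f p"
  proof (rule ccontr)
    assume none: "\<not> (\<exists>q\<in>X. snd q = snd p \<and> f q \<noteq> f p)"
    have "f (i, snd p) = f p" if "i \<in> {1..n}" for i
    proof -
      have "(i, snd p) \<in> X" using that p(1) by (cases p) (simp add: Xset_def)
      then show ?thesis using none by (metis snd_conv)
    qed
    then have "column_sum f (snd p) = (\<Sum>i=1..n. f p)" unfolding column_sum_def by simp
    moreover have "column_sum f (snd p) = 0" using sums p(1) by (auto simp: Xset_def)
    ultimately show False using p(2) n_ge_2 by simp
  qed
  then show ?thesis using that p(1) by blast
qed

lemma irreducible_Tconst: "irreducible_rep G (Tconst n k)"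
proof (rule irreducible_repI[OF Tconst_invariant])
  have "indicator X \<in> Tconst n k" by (simp add: Tconst_def funsp_def)
  moreover have "indicator X (1, 1) = (1 :: complex)" using base_point_in_X by simp
  ultimately show "Tconst n k \<noteq> {0}" by (metis neq_singleton_zeroI zero_neq_one)
  fix U f assume U: "G_invariant_sub G U" "U \<subseteq> Tconst n k" and f: "f \<in> U" "f \<noteq> 0"
  obtain c where "\<forall>x\<in>X. f x = c" "f \<in> funsp X" using f U by (auto simp: Tconst_def)
  then have fc: "f = cscale c (indicator X)" by (auto simp: fun_eq_iff funsp_def indicator_def)
  then have c: "c \<noteq> 0" using f(2) by (auto simp: fun_eq_iff)
  show "Tconst n k \<subseteq> U"
  proof
    fix g assume "g \<in> Tconst n k"
    then obtain d where "\<forall>x\<in>X. g x = d" "g \<in> funsp X" by (auto simp: Tconst_def)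
    then have "g = cscale (d / c) f" using c by (auto simp: fc fun_eq_iff funsp_def indicator_def)
    then show "g \<in> U" using cs.subspace_scale[OF G_invariant_sub_subspace[OF U(1)] f(1)] by simp
  qed
qed

lemma irreducible_Tcol: "irreducible_rep G (Tcol n k)"
proof (rule irreducible_repI[OF Tcol_invariant])
  have "col_diff 2 1 \<in> Tcol n k" by (rule col_diff_in_Tcol) (use k_ge_2 in auto)
  moreover have "col_diff 2 1 (1, 2) = 1" using col_diff_dual[of 2 2] k_ge_2 by simp
  ultimately show "Tcol n k \<noteq> {0}" by (metis neq_singleton_zeroI zero_neq_one)
  fix U f assume U: "G_invariant_sub G U" "U \<subseteq> Tcol n k" and f: "f \<in> U" "f \<noteq> 0"
  obtain u where u: "(\<Sum>j=1..k. u j) = 0" "\<forall>(i, j)\<in>X. f (i, j) = u j" and fX: "f \<in> funsp X"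
    using f U unfolding Tcol_def by blast
  have fu: "f (i, j) = u j" if "(i, j) \<in> X" for i j using u(2) that by blast
  have "\<exists>a\<in>{1..k}. \<exists>b\<in>{1..k}. u a \<noteq> u b"
    by (rule column_values_nonconstant[OF fX fu u(1) f(2)])
  then obtain a b where ab: "a \<in> {1..k}" "b \<in> {1..k}" "u a \<noteq> u b" by blast
  then have "a \<noteq> b" by blast
  have "f - perm_act (\<sigma> (1, a) (1, b)) f = cscale (u a - u b) (col_diff a b)"
    by (rule column_swap_difference[OF fX fu ab(1,2) \<open>a \<noteq> b\<close>])
  then have "col_diff a b \<in> U"
    by (rule G_invariant_sub_difference[OF U(1) swap_points_in_G[OF top_in_X[OF ab(1)] top_in_X[OF ab(2)]] f(1)])
      (use ab(3) in simp)
  then have "col_diff j 1 \<in> U" if "j \<in> {2..k}" for j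
    using col_diff_generates[OF U(1) _ ab(1,2) \<open>a \<noteq> b\<close> that] by blast
  then have "(\<lambda>j. col_diff j 1) ` {2..k} \<subseteq> U" by blast
  then show "Tcol n k \<subseteq> U"
    using Tcol_span cs.span_minimal[OF _ G_invariant_sub_subspace[OF U(1)]] by blast
qed

lemma irreducible_Trest: "irreducible_rep G (Trest n k)"
proof (rule irreducible_repI[OF Trest_invariant])
  have X: "(2, 1) \<in> X" using n_ge_2 k_ge_2 by (simp add: Xset_def)
  have "point_diff (2, 1) (1, 1) \<in> Trest n k"
    by (rule point_diff_in_Trest[OF X base_point_in_X]) simp
  moreover have "point_diff (2, 1) (1, 1) (2, 1) = 1" by (simp add: point_diff_apply)
  ultimately show "Trest n k \<noteq> {0}" by (metis neq_singleton_zeroI zero_neq_one)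
  fix U f assume U: "G_invariant_sub G U" "U \<subseteq> Trest n k" and f: "f \<in> U" "f \<noteq> 0"
  have fX: "f \<in> funsp X" using f U unfolding Trest_eq by auto
  obtain p q where p: "p \<in> X" and q: "q \<in> X" "snd q = snd p" "f q \<noteq> f p"
    using Trest_nonconstant_in_column f U by blast
  have "point_diff p q \<in> U"
    by (rule G_invariant_sub_difference[OF U(1) swap_points_in_G[OF p(1) q(1)] f(1)
        point_swap_difference[OF fX p(1) q(1) q(2)[symmetric]]]) (use q(3) in simp)
  moreover have "p \<noteq> q" using q(3) by blast
  ultimately have "point_diff t (1, snd t) \<in> U" if "t \<in> {2..n} \<times> {1..k}" for t
    using point_diff_generates[OF U(1) _ p(1) q(1) _ q(2)[symmetric] that] by blast
  then have "(\<lambda>t. point_diff t (1, snd t)) ` ({2..n} \<times> {1..k}) \<subseteq> U" by blast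
  then show "Trest n k \<subseteq> U"
    using Trest_span cs.span_minimal[OF _ G_invariant_sub_subspace[OF U(1)]] by blast
qed

lemma Tcol_fixed_if_columns_fixed:
  assumes g: "g \<in> G" and cols: "\<forall>x\<in>X. snd (g x) = snd x" and f: "f \<in> Tcol n k"
  shows "perm_act g f = f"
proof
  fix x
  have fX: "f \<in> funsp X" and const: "\<forall>x\<in>X. \<forall>y\<in>X. snd x = snd y \<longrightarrow> f x = f y"
    using f unfolding Tcol_eq by blast+
  have inv: "g (inv g x) = x" using permutes_inverses(1)[OF G_permutes[OF g]] by blast
  show "perm_act g f x = f x"
  proof (cases "x \<in> X")
    case True
    then have "inv g x \<in> X" using G_in_X[OF G_inv[OF g]] by blast
    moreover have "snd (inv g x) = snd x" using cols calculation inv by metis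
    ultimately show ?thesis unfolding perm_act_def using const True by blast
  next
    case False
    then have "inv g x \<notin> X" using G_in_X[OF g] inv by metis
    then show ?thesis unfolding perm_act_def using funspD[OF fX] False by simp
  qed
qed

lemma Tj_not_isomorphic:
  assumes "i \<in> {1, 2, 3}" "j \<in> {1, 2, 3}" "i \<noteq> j"
  shows "\<not> isomorphic_rep G (Tj n k i) (Tj n k j)"
proof -
  have X: "(2, 1) \<in> X" "(1, 2) \<in> X" using n_ge_2 k_ge_2 by (auto simp: Xset_def)
  define r where "r = \<sigma> (1, 1) (2, 1)"
  define c where "c = \<sigma> (1, 1) (1, 2)"
  have r: "r \<in> G" and c: "c \<in> G"
    unfolding r_def c_def using swap_points_in_G base_point_in_X X by blast+
  have r_cols: "\<forall>x\<in>X. snd (r x) = snd x"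
    by (auto simp: r_def swap_points_apply Transposition.transpose_def)
  have "perm_act c (col_diff 1 2) = col_diff 2 1"
    using perm_act_col_diff[OF base_point_in_X X(2)] k_ge_2 by (simp add: c_def)
  moreover have "col_diff 1 2 (1, 1) = 1" "col_diff 2 1 (1, 1) = - 1"
    using n_ge_2 by (simp_all add: col_diff_apply)
  ultimately have c_moves: "perm_act c (col_diff 1 2) \<noteq> col_diff 1 2" by (metis one_neq_neg_one)
  have "perm_act r (point_diff (2, 1) (1, 1)) = point_diff (r (2, 1)) (r (1, 1))"
    by (rule perm_act_point_diff[OF r])
  also have "\<dots> = point_diff (1, 1) (2, 1)"
    unfolding r_def swap_points_first[OF base_point_in_X X(1)] swap_points_second[OF base_point_in_X X(1)] ..
  finally have r_moves: "perm_act r (point_diff (2, 1) (1, 1)) \<noteq> point_diff (2, 1) (1, 1)"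
    by (auto simp: fun_eq_iff point_diff_apply)
  have diffs: "col_diff 1 2 \<in> Tcol n k" "point_diff (2, 1) (1, 1) \<in> Trest n k"
    using col_diff_in_Tcol k_ge_2 point_diff_in_Trest[OF X(1) base_point_in_X] by auto
  have "\<not> isomorphic_rep G (Tcol n k) (Tconst n k) \<and> \<not> isomorphic_rep G (Tconst n k) (Tcol n k)"
    by (rule not_isomorphic_rep_if_fixed[OF c _ Tcol_invariant diffs(1) c_moves])
      (simp add: Tconst_fixed[OF c])
  moreover have "\<not> isomorphic_rep G (Trest n k) (Tconst n k) \<and> \<not> isomorphic_rep G (Tconst n k) (Trest n k)"
    by (rule not_isomorphic_rep_if_fixed[OF r _ Trest_invariant diffs(2) r_moves])
      (simp add: Tconst_fixed[OF r])
  moreover have "\<not> isomorphic_rep G (Trest n k) (Tcol n k) \<and> \<not> isomorphic_rep G (Tcol n k) (Trest n k)"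
    by (rule not_isomorphic_rep_if_fixed[OF r _ Trest_invariant diffs(2) r_moves])
      (simp add: Tcol_fixed_if_columns_fixed[OF r r_cols])
  ultimately show ?thesis using assms by (auto simp: Tj_def)
qed

subsection \<open>Spherical functions\<close>

definition phi :: "complex \<Rightarrow> complex \<Rightarrow> complex \<Rightarrow> nat \<times> nat \<Rightarrow> nat \<times> nat \<Rightarrow> complex" where
  "phi \<alpha> \<beta> \<gamma> y = cscale \<alpha> (indicator X) + cscale \<beta> (indicator (col (snd y))) + cscale \<gamma> (indicator {y})"

lemma phi_base_apply:
  "phi \<alpha> \<beta> \<gamma> (1, 1) z =
     (if z \<in> X then \<alpha> + (if snd z = 1 then \<beta> else 0) + (if z = (1, 1) then \<gamma> else 0) else 0)"
  using base_point_in_X k_ge_2 by (cases z) (auto simp: phi_def column_def Xset_def indicator_def)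

lemma phi_cscale: "phi (c * \<alpha>) (c * \<beta>) (c * \<gamma>) y = cscale c (phi \<alpha> \<beta> \<gamma> y)"
  by (simp add: phi_def fun_eq_iff algebra_simps)

lemma perm_act_phi:
  assumes "g \<in> G" "y \<in> X"
  shows "perm_act g (phi \<alpha> \<beta> \<gamma> y) = phi \<alpha> \<beta> \<gamma> (g y)"
  using assms by (simp add: phi_def perm_act_indicator G_bij G_image_X G_image_column)

lemma inner_X_indicators:
  assumes x: "x \<in> X" and y: "y \<in> X"
  shows "inner_X X (indicator X) (indicator X) = of_nat (n * k)"
    and "inner_X X (indicator X) (indicator (col (snd x))) = of_nat n"
    and "inner_X X (indicator (col (snd y))) (indicator X) = of_nat n"
    and "inner_X X (indicator X) (indicator {x}) = 1"
    and "inner_X X (indicator {y}) (indicator X) = 1"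
    and "inner_X X (indicator (col (snd y))) (indicator (col (snd x))) = (if snd x = snd y then of_nat n else 0)"
    and "inner_X X (indicator (col (snd y))) (indicator {x}) = (if snd x = snd y then 1 else 0)"
    and "inner_X X (indicator {y}) (indicator (col (snd x))) = (if snd x = snd y then 1 else 0)"
    and "inner_X X (indicator {y}) (indicator {x}) = (if x = y then 1 else 0)"
proof -
  have cols: "col (snd x) \<subseteq> X" "col (snd y) \<subseteq> X"
    using x y by (auto simp: column_def Xset_def)
  have sets: "X \<inter> X \<inter> X = X" "X \<inter> X \<inter> col (snd x) = col (snd x)"
    "X \<inter> col (snd y) \<inter> X = col (snd y)" "X \<inter> X \<inter> {x} = {x}" "X \<inter> {y} \<inter> X = {y}"
    "X \<inter> col (snd y) \<inter> col (snd x) = (if snd x = snd y then col (snd x) else {})"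
    "X \<inter> col (snd y) \<inter> {x} = (if snd x = snd y then {x} else {})"
    "X \<inter> {y} \<inter> col (snd x) = (if snd x = snd y then {y} else {})"
    "X \<inter> {y} \<inter> {x} = (if x = y then {x} else {})"
    using x y cols mem_column_snd[OF x] mem_column_snd[OF y] by (auto simp: column_def)
  show "inner_X X (indicator X) (indicator X) = of_nat (n * k)"
    and "inner_X X (indicator X) (indicator (col (snd x))) = of_nat n"
    and "inner_X X (indicator (col (snd y))) (indicator X) = of_nat n"
    and "inner_X X (indicator X) (indicator {x}) = 1"
    and "inner_X X (indicator {y}) (indicator X) = 1"
    and "inner_X X (indicator (col (snd y))) (indicator (col (snd x))) = (if snd x = snd y then of_nat n else 0)"
    and "inner_X X (indicator (col (snd y))) (indicator {x}) = (if snd x = snd y then 1 else 0)"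
    and "inner_X X (indicator {y}) (indicator (col (snd x))) = (if snd x = snd y then 1 else 0)"
    and "inner_X X (indicator {y}) (indicator {x}) = (if x = y then 1 else 0)"
    unfolding inner_X_indicator[OF finite_X] sets by (simp_all add: card_X card_column)
qed

lemma inner_phi:
  assumes x: "x \<in> X" and y: "y \<in> X"
  shows "inner_X X (phi a b c y) (phi a' b' c' x) =
     a * cnj a' * of_nat (n * k) + a * cnj b' * of_nat n + a * cnj c'
   + b * cnj a' * of_nat n + b * cnj b' * (if snd x = snd y then of_nat n else 0)
   + b * cnj c' * (if snd x = snd y then 1 else 0)
   + c * cnj a' + c * cnj b' * (if snd x = snd y then 1 else 0) + c * cnj c' * (if x = y then 1 else 0)"
  unfolding phi_def inner_X_add_left inner_X_add_right inner_X_cscale_left inner_X_cscale_right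
  using inner_X_indicators[OF x y] by (simp add: algebra_simps)

lemma sum_phi: "y \<in> X \<Longrightarrow> (\<Sum>z\<in>X. phi \<alpha> \<beta> \<gamma> y z) = \<alpha> * of_nat (n * k) + \<beta> * of_nat n + \<gamma>"
  using inner_phi[of y y \<alpha> \<beta> \<gamma> 1 0 0]
  by (simp add: inner_X_def phi_def indicator_def)

lemma column_sum_phi:
  assumes "y \<in> X" "j \<in> {1..k}"
  shows "column_sum (phi \<alpha> \<beta> \<gamma> y) j = \<alpha> * of_nat n + (if j = snd y then \<beta> * of_nat n + \<gamma> else 0)"
proof -
  obtain a b where y: "y = (a, b)" "a \<in> {1..n}" using assms(1) by (cases y) (auto simp: Xset_def)
  have "column_sum (phi \<alpha> \<beta> \<gamma> y) j
      = (\<Sum>i=1..n. \<alpha> + (if j = b then \<beta> else 0) + (if i = a \<and> j = b then \<gamma> else 0))"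
    unfolding column_sum_def using assms y
    by (intro sum.cong refl) (auto simp: phi_def column_def Xset_def indicator_def)
  also have "\<dots> = \<alpha> * of_nat n + (if j = snd y then \<beta> * of_nat n + \<gamma> else 0)"
    using y by (simp add: sum.distrib algebra_simps)
  finally show ?thesis .
qed

lemma H_fixed_orbit_const:
  assumes fixed: "\<forall>h\<in>H. perm_act h f = f"
    and zw: "z \<in> orb2 n k \<and> w \<in> orb2 n k \<or> z \<in> orb3 n k \<and> w \<in> orb3 n k"
  shows "f z = f w"
proof -
  have X: "w \<in> X" "z \<in> X" using zw by (auto simp: orb2_eq orb3_eq)
  have "\<sigma> w z \<in> H"
    using swap_points_in_H[OF X] swap_points_fixes_base_point zw by blast
  then have "perm_act (\<sigma> w z) f z = f z" using fixed by simp
  then show ?thesis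
    by (simp add: perm_act_def inv_swap_points[OF X] swap_points_second[OF X])
qed

text \<open>An \<open>H\<close>-invariant function is constant on each of the three \<open>H\<close>-orbits, so it is determined
  by its values at \<open>(1, 1)\<close>, \<open>(2, 1)\<close> and \<open>(1, 2)\<close>.\<close>

lemma H_fixed_eq_phi:
  assumes f: "f \<in> funsp X" and fixed: "\<forall>h\<in>H. perm_act h f = f"
  shows "f = phi (f (1, 2)) (f (2, 1) - f (1, 2)) (f (1, 1) - f (2, 1)) (1, 1)"
proof
  fix z
  have orbs: "(2, 1) \<in> orb2 n k" "(1, 2) \<in> orb3 n k"
    using n_ge_2 k_ge_2 by (auto simp: orb2_def orb3_def)
  show "f z = phi (f (1, 2)) (f (2, 1) - f (1, 2)) (f (1, 1) - f (2, 1)) (1, 1) z"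
  proof (cases "z \<in> X")
    case True
    then consider "z = (1, 1)" | "z \<in> orb2 n k" | "z \<in> orb3 n k"
      by (auto simp: orb2_eq orb3_eq)
    then show ?thesis
    proof cases
      case 2
      then have "f z = f (2, 1)" using H_fixed_orbit_const[OF fixed] orbs by blast
      then show ?thesis using 2 True phi_base_apply by (simp add: orb2_eq)
    next
      case 3
      then have "f z = f (1, 2)" using H_fixed_orbit_const[OF fixed] orbs by blast
      moreover have "z \<noteq> (1, 1)" using 3 by (auto simp: orb3_eq)
      ultimately show ?thesis using 3 True phi_base_apply by (simp add: orb3_eq)
    qed (use phi_base_apply True in simp)
  next
    case False
    then show ?thesis using funspD[OF f] phi_base_apply by simp
  qed
qed

lemma Tconst_fixed_line:
  assumes f: "f \<in> Tconst n k" and fixed: "\<forall>h\<in>H. perm_act h f = f"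
  shows "\<exists>c. f = cscale c (phi 1 0 0 (1, 1))"
proof -
  obtain c where c: "\<forall>x\<in>X. f x = c" and fX: "f \<in> funsp X" using f by (auto simp: Tconst_def)
  have "(2, 1) \<in> X" "(1, 2) \<in> X" using n_ge_2 k_ge_2 by (auto simp: Xset_def)
  have "f = phi (f (1, 2)) (f (2, 1) - f (1, 2)) (f (1, 1) - f (2, 1)) (1, 1)"
    by (rule H_fixed_eq_phi[OF fX fixed])
  also have "\<dots> = phi (c * 1) (c * 0) (c * 0) (1, 1)"
    using c base_point_in_X \<open>(2, 1) \<in> X\<close> \<open>(1, 2) \<in> X\<close> by simp
  finally show ?thesis unfolding phi_cscale by blast
qed

lemma Tcol_fixed_line:
  assumes f: "f \<in> Tcol n k" and fixed: "\<forall>h\<in>H. perm_act h f = f"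
  shows "\<exists>c. f = cscale c (phi (-1) (of_nat k) 0 (1, 1))"
proof -
  have fX: "f \<in> funsp X" and const: "\<forall>x\<in>X. \<forall>y\<in>X. snd x = snd y \<longrightarrow> f x = f y"
    and sum: "(\<Sum>x\<in>X. f x) = 0"
    using f unfolding Tcol_eq by blast+
  define \<alpha> \<beta> where "\<alpha> = f (1, 2)" and "\<beta> = f (2, 1) - f (1, 2)"
  have "(2, 1) \<in> X" using n_ge_2 k_ge_2 by (simp add: Xset_def)
  then have "f (1, 1) = f (2, 1)" using const[rule_format, OF base_point_in_X] by (metis snd_conv)
  have "f = phi (f (1, 2)) (f (2, 1) - f (1, 2)) (f (1, 1) - f (2, 1)) (1, 1)"
    by (rule H_fixed_eq_phi[OF fX fixed])
  also have "\<dots> = phi \<alpha> \<beta> 0 (1, 1)" using \<open>f (1, 1) = f (2, 1)\<close> by (simp add: \<alpha>_def \<beta>_def)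
  finally have f_eq: "f = phi \<alpha> \<beta> 0 (1, 1)" .
  then have "\<alpha> * of_nat (n * k) + \<beta> * of_nat n = 0"
    using sum sum_phi[OF base_point_in_X, of \<alpha> \<beta> 0] by simp
  then have "(\<beta> + of_nat k * \<alpha>) * of_nat n = 0" by (simp add: algebra_simps)
  then have "\<beta> = - of_nat k * \<alpha>" using n_ge_2 by (simp add: eq_neg_iff_add_eq_0)
  then have "f = phi (- \<alpha> * - 1) (- \<alpha> * of_nat k) (- \<alpha> * 0) (1, 1)" using f_eq by (simp add: mult.commute)
  then show ?thesis unfolding phi_cscale by blast
qed

lemma Trest_fixed_line:
  assumes f: "f \<in> Trest n k" and fixed: "\<forall>h\<in>H. perm_act h f = f"
  shows "\<exists>c. f = cscale c (phi 0 (-1) (of_nat n) (1, 1))"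
proof -
  have fX: "f \<in> funsp X" and sums: "\<forall>j\<in>{1..k}. column_sum f j = 0"
    using f unfolding Trest_eq by blast+
  define \<alpha> \<beta> \<gamma> where "\<alpha> = f (1, 2)" and "\<beta> = f (2, 1) - f (1, 2)" and "\<gamma> = f (1, 1) - f (2, 1)"
  have f_eq: "f = phi \<alpha> \<beta> \<gamma> (1, 1)"
    unfolding \<alpha>_def \<beta>_def \<gamma>_def by (rule H_fixed_eq_phi[OF fX fixed])
  have "\<alpha> * of_nat n = 0"
    using sums column_sum_phi[OF base_point_in_X, of 2 \<alpha> \<beta> \<gamma>] k_ge_2 f_eq by simp
  then have \<alpha>: "\<alpha> = 0" using n_ge_2 by simp
  have "\<alpha> * of_nat n + (\<beta> * of_nat n + \<gamma>) = 0"
    using sums column_sum_phi[OF base_point_in_X, of 1 \<alpha> \<beta> \<gamma>] k_ge_2 f_eq by simp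
  then have "\<gamma> = - \<beta> * of_nat n" using \<alpha> by (simp add: algebra_simps eq_neg_iff_add_eq_0)
  then have "f = phi (- \<beta> * 0) (- \<beta> * - 1) (- \<beta> * of_nat n) (1, 1)" using f_eq \<alpha> by simp
  then show ?thesis unfolding phi_cscale by blast
qed

lemma phi_in_Tconst: "phi 1 0 0 (1, 1) \<in> Tconst n k"
  using phi_base_apply by (simp add: Tconst_def funsp_def)

lemma phi_in_Tcol: "phi (-1) (of_nat k) 0 (1, 1) \<in> Tcol n k"
proof -
  have "(\<Sum>z\<in>X. phi (-1) (of_nat k) 0 (1, 1) z) = 0"
    using sum_phi[OF base_point_in_X, of "-1" "of_nat k" 0] by simp
  moreover have "phi (-1) (of_nat k) 0 (1, 1) \<in> funsp X"
    using phi_base_apply by (simp add: funsp_def)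
  moreover have "phi (-1) (of_nat k) 0 (1, 1) x = phi (-1) (of_nat k) 0 (1, 1) y"
    if "x \<in> X" "y \<in> X" "snd x = snd y" for x y
    using that phi_base_apply by simp
  ultimately show ?thesis unfolding Tcol_eq by blast
qed

lemma phi_in_Trest: "phi 0 (-1) (of_nat n) (1, 1) \<in> Trest n k"
  unfolding Trest_eq using phi_base_apply column_sum_phi[OF base_point_in_X]
  by (simp add: funsp_def)

lemma norm_phi_Tconst:
  "inner_X X (phi 1 0 0 (1, 1)) (phi 1 0 0 (1, 1)) = of_real (real (n * k))"
  using inner_phi[OF base_point_in_X base_point_in_X, of 1 0 0 1 0 0] by simp

lemma norm_phi_Tcol:
  "inner_X X (phi (-1) (of_nat k) 0 (1, 1)) (phi (-1) (of_nat k) 0 (1, 1)) = of_real (real (n * k * (k - 1)))"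
  using inner_phi[OF base_point_in_X base_point_in_X, of "-1" "of_nat k" 0 "-1" "of_nat k" 0] k_ge_2
  by (simp add: of_nat_diff algebra_simps)

lemma norm_phi_Trest:
  "inner_X X (phi 0 (-1) (of_nat n) (1, 1)) (phi 0 (-1) (of_nat n) (1, 1)) = of_real (real (n * (n - 1)))"
  using inner_phi[OF base_point_in_X base_point_in_X, of 0 "-1" "of_nat n" 0 "-1" "of_nat n"] n_ge_2
  by (simp add: of_nat_diff algebra_simps)

lemma rep_of_base_point:
  assumes "x \<in> X"
  shows "rep_of G (1, 1) x \<in> G \<and> rep_of G (1, 1) x (1, 1) = x"
proof -
  have "\<sigma> (1, 1) x \<in> G \<and> \<sigma> (1, 1) x (1, 1) = x"
    using swap_points_in_G[OF base_point_in_X assms] swap_points_first[OF base_point_in_X assms] by blast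
  then show ?thesis unfolding rep_of_def by (rule someI[where P = "\<lambda>g. g \<in> G \<and> g (1, 1) = x"])
qed

lemma Psi_via_phi:
  assumes T: "csubspace T" "phi \<alpha> \<beta> \<gamma> (1, 1) \<in> T"
    and norm: "inner_X X (phi \<alpha> \<beta> \<gamma> (1, 1)) (phi \<alpha> \<beta> \<gamma> (1, 1)) = of_real N" "N > 0"
    and line: "\<And>f. f \<in> T \<Longrightarrow> \<forall>h\<in>H. perm_act h f = f \<Longrightarrow> \<exists>c. f = cscale c (phi \<alpha> \<beta> \<gamma> (1, 1))"
    and xy: "x \<in> X" "y \<in> X"
  shows "Psi G H X (1, 1) T (x, y) =
    of_nat (cdim T) / of_nat (n * k) * (inner_X X (phi \<alpha> \<beta> \<gamma> y) (phi \<alpha> \<beta> \<gamma> x) / of_real N)"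
proof -
  define a b where "a = rep_of G (1, 1) x" and "b = rep_of G (1, 1) y"
  have a: "a \<in> G" "a (1, 1) = x" and b: "b \<in> G" "b (1, 1) = y"
    using rep_of_base_point xy by (auto simp: a_def b_def)
  have fixed: "\<forall>h\<in>H. perm_act h (phi \<alpha> \<beta> \<gamma> (1, 1)) = phi \<alpha> \<beta> \<gamma> (1, 1)"
  proof
    fix h assume h: "h \<in> H"
    show "perm_act h (phi \<alpha> \<beta> \<gamma> (1, 1)) = phi \<alpha> \<beta> \<gamma> (1, 1)"
      unfolding perm_act_phi[OF H_in_G[OF h] base_point_in_X] H_fixes[OF h] ..
  qed
  have "Psi G H X (1, 1) T (x, y) = psi H X T (inv a \<circ> b)"
    using xy by (simp add: Psi_def a_def b_def)
  also have "\<dots> = of_nat (cdim T) / of_nat (card X) *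
      (inner_X X (perm_act b (phi \<alpha> \<beta> \<gamma> (1, 1))) (perm_act a (phi \<alpha> \<beta> \<gamma> (1, 1))) / of_real N)"
    by (rule psi_eq_if_fixed_line[OF T fixed norm line G_permutes[OF a(1)] G_permutes[OF b(1)]])
  also have "\<dots> = of_nat (cdim T) / of_nat (n * k) *
      (inner_X X (phi \<alpha> \<beta> \<gamma> y) (phi \<alpha> \<beta> \<gamma> x) / of_real N)"
    unfolding perm_act_phi[OF a(1) base_point_in_X] perm_act_phi[OF b(1) base_point_in_X] a(2) b(2) card_X ..
  finally show ?thesis .
qed

lemma Psi_Tconst:
  assumes xy: "x \<in> X" "y \<in> X"
  shows "Psi G H X (1, 1) (Tconst n k) (x, y) = 1 / of_nat (n * k)"
proof -
  have "real (n * k) > 0" using n_ge_2 k_ge_2 by simp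
  then have "Psi G H X (1, 1) (Tconst n k) (x, y) = of_nat (cdim (Tconst n k)) / of_nat (n * k) *
      (inner_X X (phi 1 0 0 y) (phi 1 0 0 x) / of_real (real (n * k)))"
    by (rule Psi_via_phi[OF G_invariant_sub_subspace[OF Tconst_invariant] phi_in_Tconst norm_phi_Tconst _
        Tconst_fixed_line xy])
  also have "\<dots> = 1 / of_nat (n * k)"
    using inner_phi[OF xy, of 1 0 0 1 0 0] dim_Tconst n_ge_2 k_ge_2 by simp
  finally show ?thesis .
qed

lemma Psi_Tcol:
  assumes xy: "x \<in> X" "y \<in> X"
  shows "Psi G H X (1, 1) (Tcol n k) (x, y) =
    (if snd x = snd y then of_nat k - 1 else - 1) / of_nat (n * k)"
proof -
  have "real (n * k * (k - 1)) > 0" using n_ge_2 k_ge_2 by simp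
  then have "Psi G H X (1, 1) (Tcol n k) (x, y) = of_nat (cdim (Tcol n k)) / of_nat (n * k) *
      (inner_X X (phi (-1) (of_nat k) 0 y) (phi (-1) (of_nat k) 0 x) / of_real (real (n * k * (k - 1))))"
    by (rule Psi_via_phi[OF G_invariant_sub_subspace[OF Tcol_invariant] phi_in_Tcol norm_phi_Tcol _
        Tcol_fixed_line xy])
  then have Psi: "Psi G H X (1, 1) (Tcol n k) (x, y) = of_nat (k - 1) / of_nat (n * k) *
      (inner_X X (phi (-1) (of_nat k) 0 y) (phi (-1) (of_nat k) 0 x) / of_real (real (n * k * (k - 1))))"
    by (simp only: dim_Tcol)
  have inner: "inner_X X (phi (-1) (of_nat k) 0 y) (phi (-1) (of_nat k) 0 x) =
      of_nat (n * k) - 2 * of_nat k * of_nat n + (if snd x = snd y then of_nat k * of_nat k * of_nat n else 0)"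
    using inner_phi[OF xy, of "-1" "of_nat k" 0 "-1" "of_nat k" 0] by (simp add: algebra_simps)
  have k: "(of_real (real (n * k * (k - 1))) :: complex) = of_nat n * of_nat k * (of_nat k - 1)"
    "(of_nat (k - 1) :: complex) = of_nat k - 1" "(of_nat k :: complex) - 1 \<noteq> 0"
    using k_ge_2 by (simp_all add: of_nat_diff)
  show ?thesis
    unfolding Psi inner k(1,2) using k(3) n_ge_2 k_ge_2
    by (cases "snd x = snd y") (simp_all add: field_simps)
qed

lemma Psi_Trest:
  assumes xy: "x \<in> X" "y \<in> X"
  shows "Psi G H X (1, 1) (Trest n k) (x, y) =
    (if x = y then of_nat n - 1 else if snd x = snd y then - 1 else 0) / of_nat n"
proof -
  have "real (n * (n - 1)) > 0" using n_ge_2 by simp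
  then have "Psi G H X (1, 1) (Trest n k) (x, y) = of_nat (cdim (Trest n k)) / of_nat (n * k) *
      (inner_X X (phi 0 (-1) (of_nat n) y) (phi 0 (-1) (of_nat n) x) / of_real (real (n * (n - 1))))"
    by (rule Psi_via_phi[OF G_invariant_sub_subspace[OF Trest_invariant] phi_in_Trest norm_phi_Trest _
        Trest_fixed_line xy])
  then have Psi: "Psi G H X (1, 1) (Trest n k) (x, y) = of_nat ((n - 1) * k) / of_nat (n * k) *
      (inner_X X (phi 0 (-1) (of_nat n) y) (phi 0 (-1) (of_nat n) x) / of_real (real (n * (n - 1))))"
    by (simp only: dim_Trest)
  have inner: "inner_X X (phi 0 (-1) (of_nat n) y) (phi 0 (-1) (of_nat n) x) =
      (if snd x = snd y then - of_nat n else 0) + (if x = y then of_nat n * of_nat n else 0)"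
    using inner_phi[OF xy, of 0 "-1" "of_nat n" 0 "-1" "of_nat n"]
    by (cases "snd x = snd y"; cases "x = y") (simp_all add: algebra_simps)
  have n: "(of_real (real (n * (n - 1))) :: complex) = of_nat n * (of_nat n - 1)"
    "(of_nat ((n - 1) * k) :: complex) = (of_nat n - 1) * of_nat k" "(of_nat n :: complex) - 1 \<noteq> 0"
    using n_ge_2 by (simp_all add: of_nat_diff)
  show ?thesis
    unfolding Psi inner n(1,2) using n(3) n_ge_2 k_ge_2
    by (cases "x = y"; cases "snd x = snd y") (simp_all add: field_simps)
qed

subsection \<open>The matrix of inner products\<close>

definition orbit_type :: "nat \<times> nat \<Rightarrow> nat \<times> nat \<Rightarrow> nat" where
  "orbit_type x y = (if x = y then 1 else if snd x = snd y then 2 else 3)"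

definition Psi_value :: "nat \<Rightarrow> nat \<Rightarrow> complex" where
  "Psi_value j i = (if j = 1 then 1 / of_nat (n * k)
     else if j = 2 then (if i = 3 then - 1 else of_nat k - 1) / of_nat (n * k)
     else (if i = 1 then of_nat n - 1 else if i = 2 then - 1 else 0) / of_nat n)"

lemma Psi_eq_Psi_value:
  "j \<in> {1, 2, 3} \<Longrightarrow> x \<in> X \<Longrightarrow> y \<in> X \<Longrightarrow>
     Psi G H X (1, 1) (Tj n k j) (x, y) = Psi_value j (orbit_type x y)"
  using Psi_Tconst Psi_Tcol Psi_Trest by (auto simp: Tj_def Psi_value_def orbit_type_def)

lemma orbit_type_G_invariant:
  "g \<in> G \<Longrightarrow> x \<in> X \<Longrightarrow> y \<in> X \<Longrightarrow> orbit_type (g x) (g y) = orbit_type x y"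
  using G_inj G_same_column by (simp add: orbit_type_def)

lemma orbit_type_base_point:
  "y \<in> X \<Longrightarrow> i \<in> {1, 2, 3} \<Longrightarrow> orbit_type (1, 1) y = i \<longleftrightarrow> y \<in> orbj n k i"
  by (auto simp: orbit_type_def orbj_def orb1_eq orb2_eq orb3_eq)

lemma card_orbit_type_fibre:
  assumes x: "x \<in> X" and i: "i \<in> {1, 2, 3}"
  shows "card {y \<in> X. orbit_type x y = i} = card (orbj n k i)"
proof -
  define g where "g = \<sigma> (1, 1) x"
  have g: "g \<in> G" "g (1, 1) = x" "g x = (1, 1)" "\<And>y. g (g y) = y"
    unfolding g_def using swap_points_in_G swap_points_first swap_points_second swap_points_involution
      base_point_in_X x by blast+
  have "{y \<in> X. orbit_type x y = i} = g ` orbj n k i"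
  proof (intro equalityI subsetI)
    fix y assume y: "y \<in> {y \<in> X. orbit_type x y = i}"
    then have "orbit_type (1, 1) (g y) = i" using orbit_type_G_invariant[OF g(1) x] g(3) by simp
    then have "g y \<in> orbj n k i" using orbit_type_base_point G_in_X[OF g(1)] y i by blast
    then show "y \<in> g ` orbj n k i" using g(4) by (metis image_eqI)
  next
    fix y assume "y \<in> g ` orbj n k i"
    then obtain z where z: "z \<in> orbj n k i" "y = g z" by blast
    then have "z \<in> X" using orbj_subset_X by blast
    then show "y \<in> {y \<in> X. orbit_type x y = i}"
      using z orbit_type_G_invariant[OF g(1) base_point_in_X] orbit_type_base_point i g(2) G_in_X[OF g(1)]
      by simp
  qed
  moreover have "inj_on g (orbj n k i)" using G_inj[OF g(1)] by (simp add: inj_on_def)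
  ultimately show ?thesis by (simp add: card_image)
qed

lemma G_orbit_pairs:
  assumes i: "i \<in> {1, 2, 3}"
  shows "{(g (1, 1), g y) | g y. g \<in> G \<and> y \<in> orbj n k i} = {(x, y) \<in> X \<times> X. orbit_type x y = i}"
proof (intro equalityI subsetI)
  fix p assume "p \<in> {(g (1, 1), g y) | g y. g \<in> G \<and> y \<in> orbj n k i}"
  then obtain g y where p: "p = (g (1, 1), g y)" and g: "g \<in> G" and y: "y \<in> orbj n k i" by blast
  have "y \<in> X" using y orbj_subset_X by blast
  then show "p \<in> {(x, y) \<in> X \<times> X. orbit_type x y = i}"
    using p G_in_X[OF g] base_point_in_X orbit_type_G_invariant[OF g base_point_in_X]
      orbit_type_base_point i y by simp
next
  fix p assume "p \<in> {(x, y) \<in> X \<times> X. orbit_type x y = i}"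
  then obtain x y where p: "p = (x, y)" "x \<in> X" "y \<in> X" "orbit_type x y = i" by blast
  define g where "g = \<sigma> (1, 1) x"
  have g: "g \<in> G" "g (1, 1) = x" "g x = (1, 1)" "g (g y) = y"
    unfolding g_def using swap_points_in_G swap_points_first swap_points_second swap_points_involution
      base_point_in_X p(2) by blast+
  have "orbit_type (1, 1) (g y) = i"
    using orbit_type_G_invariant[OF g(1) p(2,3)] g(3) p(4) by simp
  then have "g y \<in> orbj n k i" using orbit_type_base_point G_in_X[OF g(1) p(3)] i by blast
  then show "p \<in> {(g (1, 1), g y) | g y. g \<in> G \<and> y \<in> orbj n k i}"
    using p(1) g by (metis (mono_tags, lifting) mem_Collect_eq)
qed

lemma card_orbit_rel:
  assumes i: "i \<in> {1, 2, 3}"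
  shows "card {(x, y) \<in> X \<times> X. orbit_type x y = i} = n * k * card (orbj n k i)"
proof -
  have "{(x, y) \<in> X \<times> X. orbit_type x y = i} = Sigma X (\<lambda>x. {y \<in> X. orbit_type x y = i})"
    by auto
  then have "card {(x, y) \<in> X \<times> X. orbit_type x y = i} = (\<Sum>x\<in>X. card {y \<in> X. orbit_type x y = i})"
    using finite_X by (simp add: card_SigmaI)
  also have "\<dots> = (\<Sum>x\<in>X. card (orbj n k i))"
    using card_orbit_type_fibre[OF _ i] by simp
  finally show ?thesis by (simp add: card_X)
qed

lemma Cmat_eq:
  assumes i: "i \<in> {1, 2, 3}" and j: "j \<in> {1, 2, 3}"
  shows "Cmat n k i j = of_nat (n * k * card (orbj n k i)) * cnj (Psi_value j i)"
proof -
  let ?R = "{(x, y) \<in> X \<times> X. orbit_type x y = i}"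
  have "Cmat n k i j = (\<Sum>p\<in>X \<times> X. (if p \<in> ?R then 1 else 0) * cnj (Psi G H X (1, 1) (Tj n k j) p))"
    unfolding Cmat_def inner_XX_def orbit_char_def G_orbit_pairs[OF i] ..
  also have "\<dots> = (\<Sum>p\<in>X \<times> X. if p \<in> ?R then cnj (Psi_value j i) else 0)"
    using Psi_eq_Psi_value[OF j] by (intro sum.cong) auto
  also have "\<dots> = (\<Sum>p\<in>(X \<times> X) \<inter> ?R. cnj (Psi_value j i))"
    by (rule sum.inter_restrict[OF finite_cartesian_product[OF finite_X finite_X], symmetric])
  also have "(X \<times> X) \<inter> ?R = ?R" by blast
  finally show ?thesis using card_orbit_rel[OF i] by simp
qed

lemma Cmat_eq_Mmat:
  assumes i: "i \<in> {1, 2, 3}" and j: "j \<in> {1, 2, 3}"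
  shows "Cmat n k i j = of_int (Mmat n k i j)"
proof -
  have "card (orbj n k i) = (if i = 1 then 1 else if i = 2 then n - 1 else n * (k - 1))"
    by (simp add: orbj_def orb1_def orb2_def orb3_def)
  then show ?thesis
    unfolding Cmat_eq[OF i j] using i j n_ge_2 k_ge_2
    by (auto simp: Psi_value_def Mmat_def Let_def of_nat_diff field_simps)
qed

lemma irreducible_Tj: "j \<in> {1, 2, 3} \<Longrightarrow> irreducible_rep G (Tj n k j)"
  using irreducible_Tconst irreducible_Tcol irreducible_Trest by (auto simp: Tj_def)

end

lemma Mmat_transpose: "Mmat n k j i = Mmat k n i j"
  by (simp add: Mmat_def Let_def algebra_simps)

theorem mainTheorem15:
  fixes n k :: nat
  assumes "n \<ge> 2" and "k \<ge> 2"
  shows "gelfand_pair (stabH n k) (wreathG n k)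
    \<and> orbits_of (stabH n k) (Xset n k) = {orb1 n k, orb2 n k, orb3 n k}
    \<and> card (orb1 n k) = 1 \<and> card (orb2 n k) = n - 1 \<and> card (orb3 n k) = n * (k - 1)
    \<and> direct_sum3 (funsp (Xset n k)) (Tconst n k) (Tcol n k) (Trest n k)
    \<and> (\<forall>j\<in>{1, 2, 3}. irreducible_rep (wreathG n k) (Tj n k j))
    \<and> (\<forall>i\<in>{1, 2, 3}. \<forall>j\<in>{1, 2, 3}. i \<noteq> j \<longrightarrow>
          \<not> isomorphic_rep (wreathG n k) (Tj n k i) (Tj n k j))
    \<and> cdim (Tcol n k) = k - 1 \<and> cdim (Trest n k) = (n - 1) * k
    \<and> (\<forall>i\<in>{1, 2, 3}. \<forall>j\<in>{1, 2, 3}. Cmat n k i j = of_int (Mmat n k i j))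
    \<and> (\<forall>i\<in>{1, 2, 3}. \<forall>j\<in>{1, 2, 3}. Mmat n k j i = Mmat k n i j)"
proof -
  interpret wreath n k using assms by unfold_locales
  show ?thesis
    by (intro conjI ballI impI gelfand H_orbits direct_sum_decomposition irreducible_Tj
        Tj_not_isomorphic dim_Tcol dim_Trest Cmat_eq_Mmat Mmat_transpose)
      (simp_all add: orb1_def orb2_def orb3_def)
qed

end
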